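(* Let $G$ satisfy conditions (1)–(5) below and let $C_G\subset\mathbb{P}^{d-g}$ be the union of lines defined by an admissible labeling of $\tilde G$ (see context). If $C_G$ contains a cycle of $m$ lines (i.e. $G$ contains a cycle of length $m$), then $C_G$ fails property $N_{2,m-2}$.
   Context: Work over an algebraically closed field of characteristic zero, $S=k[x_0,\ldots,x_{d-g}]$. Conditions on the finite graph $G=(V,E)$, $d=|V|$, $g=|E|-d+1$: (1) connected; (2) simple; (3) every vertex has degree at most $3$ and some vertex has degree less than $3$; (4) the shortest path between any two distinct vertices of degree $3$ has at least $3$ edges; (5) no triangles. Let $\tilde G$ be obtained from $G$ by attaching one loop at each vertex of degree $1$. An admissible labeling of the edges of $\tilde G$: for each vertex of degree $3$ choose two indices $j\neq k$ in $\{0,\ldots,d-g\}$ and label its three edges $e_j,e_k,e_j-e_k$; label each remaining edge $e_i$ with an unused index, distinct indices being used throughout. An index $i$ appears on an edge labeled $e_i$ or $\pm(e_i-e_j)$. For each vertex $v$: if $v$ has degree $3$ with edges $e_j,e_k,e_j-e_k$, $I_v=(x_i: i\neq j,k)$; otherwise $I_v$ is generated by the $x_i$ with $i$ not appearing on an edge of $\tilde G$ at $v$, together with $x_j-x_k$ if some edge at $v$ is labeled $e_j-e_k$. $L_v=V(I_v)$, $C_G=\bigcup_v L_v$. A subscheme $X\subseteq\mathbb{P}^n$ with homogeneous coordinate ring $S_X=S/I_X$ satisfies $N_{k,p}$ if $\beta_{i,j}(S_X)\neq 0$ implies $j=i+k-1$ for all $1\le i\le p$, where $\beta_{i,j}$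 are the graded Betti numbers of $S_X$ over $S$ (i.e. $I_X$ is generated by forms of degree $k$ and the syzygies are linear through the $p$-th step). *)

theory Defs
  imports "HOL-Computational_Algebra.Polynomial" "HOL-Library.Poly_Mapping"
begin

definition graph :: "'v set \<Rightarrow> 'v set set \<Rightarrow> bool" where
  "graph V E \<longleftrightarrow> finite V \<and> (\<forall>e\<in>E. e \<subseteq> V \<and> card e = 2)"

definition adj :: "'v set set \<Rightarrow> 'v \<Rightarrow> 'v \<Rightarrow> bool" where
  "adj E u w \<longleftrightarrow> {u, w} \<in> E"

definition gdeg :: "'v set set \<Rightarrow> 'v \<Rightarrow> nat" where
  "gdeg E v = card {e \<in> E. v \<in> e}"

text \<open>A walk is a nonempty list of vertices, consecutive ones adjacent;
  its length (number of edges) is the list length minus one.\<close>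

definition walk :: "'v set \<Rightarrow> 'v set set \<Rightarrow> 'v list \<Rightarrow> bool" where
  "walk V E ws \<longleftrightarrow> ws \<noteq> [] \<and> set ws \<subseteq> V \<and>
     (\<forall>i. Suc i < length ws \<longrightarrow> adj E (ws ! i) (ws ! Suc i))"

definition connected_graph :: "'v set \<Rightarrow> 'v set set \<Rightarrow> bool" where
  "connected_graph V E \<longleftrightarrow>
     (\<forall>u\<in>V. \<forall>w\<in>V. \<exists>ws. walk V E ws \<and> hd ws = u \<and> last ws = w)"

definition deg3_far :: "'v set \<Rightarrow> 'v set set \<Rightarrow> bool" where
  "deg3_far V E \<longleftrightarrow>
     (\<forall>u\<in>V. \<forall>w\<in>V. u \<noteq> w \<longrightarrow> gdeg E u = 3 \<longrightarrow> gdeg E w = 3 \<longrightarrow>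
        (\<forall>ws. walk V E ws \<longrightarrow> hd ws = u \<longrightarrow> last ws = w \<longrightarrow> length ws - 1 \<ge> 3))"

definition triangle_free :: "'v set \<Rightarrow> 'v set set \<Rightarrow> bool" where
  "triangle_free V E \<longleftrightarrow>
     \<not> (\<exists>a\<in>V. \<exists>b\<in>V. \<exists>c\<in>V. adj E a b \<and> adj E b c \<and> adj E a c)"

definition graph_conditions :: "'v set \<Rightarrow> 'v set set \<Rightarrow> bool" where
  "graph_conditions V E \<longleftrightarrow>
     graph V E \<and> connected_graph V E \<and>
     (\<forall>v\<in>V. gdeg E v \<le> 3) \<and> (\<exists>v\<in>V. gdeg E v < 3) \<and>
     deg3_far V E \<and> triangle_free V E"

definition has_cycle :: "'v set \<Rightarrow> 'v set set \<Rightarrow> nat \<Rightarrow> bool" where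
  "has_cycle V E m \<longleftrightarrow> m \<ge> 3 \<and>
     (\<exists>vs. length vs = m \<and> distinct vs \<and> set vs \<subseteq> V \<and>
        (\<forall>i<m. adj E (vs ! i) (vs ! ((i + 1) mod m))))"

text \<open>G-tilde: a loop at a vertex v is represented by the singleton {v}.\<close>

definition tedges :: "'v set \<Rightarrow> 'v set set \<Rightarrow> 'v set set" where
  "tedges V E = E \<union> {{v} | v. v \<in> V \<and> gdeg E v = 1}"

text \<open>Labels: Lab i stands for e_i, Dif j k stands for e_j - e_k.\<close>

datatype label = Lab nat | Dif nat nat

fun lab_idx :: "label \<Rightarrow> nat set" where
  "lab_idx (Lab i) = {i}"
| "lab_idx (Dif j k) = {j, k}"

definition admissible :: "'v set \<Rightarrow> 'v set set \<Rightarrow> nat \<Rightarrow> ('v set \<Rightarrow> label) \<Rightarrow> bool" where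
  "admissible V E n lab \<longleftrightarrow>
     (\<forall>e\<in>tedges V E. lab_idx (lab e) \<subseteq> {0..n}) \<and>
     (\<forall>v\<in>V. gdeg E v = 3 \<longrightarrow>
        (\<exists>j k. j \<noteq> k \<and> lab ` {e \<in> tedges V E. v \<in> e} = {Lab j, Lab k, Dif j k})) \<and>
     (\<forall>e\<in>tedges V E. (\<forall>v\<in>e. gdeg E v \<noteq> 3) \<longrightarrow> (\<exists>i. lab e = Lab i)) \<and>
     (\<forall>e\<in>tedges V E. \<forall>e'\<in>tedges V E. e \<noteq> e' \<longrightarrow>
        \<not> (\<exists>v. v \<in> e \<and> v \<in> e' \<and> gdeg E v = 3) \<longrightarrow>
        lab_idx (lab e) \<inter> lab_idx (lab e') = {})"

type_synonym 'k mpoly = "(nat \<Rightarrow>\<^sub>0 nat) \<Rightarrow>\<^sub>0 'k"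

definition Var :: "nat \<Rightarrow> 'k::comm_ring_1 mpoly" where
  "Var i = Poly_Mapping.single (Poly_Mapping.single i 1) 1"

definition polyS :: "nat \<Rightarrow> 'k::comm_ring_1 mpoly set" where
  "polyS n = {f. \<forall>m\<in>Poly_Mapping.keys f. Poly_Mapping.keys m \<subseteq> {0..n}}"

definition mdeg :: "(nat \<Rightarrow>\<^sub>0 nat) \<Rightarrow> nat" where
  "mdeg m = (\<Sum>i\<in>Poly_Mapping.keys m. Poly_Mapping.lookup m i)"

definition homog :: "nat \<Rightarrow> 'k::comm_ring_1 mpoly \<Rightarrow> bool" where
  "homog d f \<longleftrightarrow> (\<forall>m\<in>Poly_Mapping.keys f. mdeg m = d)"

definition eval :: "'k::comm_ring_1 mpoly \<Rightarrow> (nat \<Rightarrow> 'k) \<Rightarrow> 'k" where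
  "eval f p = (\<Sum>m\<in>Poly_Mapping.keys f. Poly_Mapping.lookup f m * (\<Prod>i\<in>Poly_Mapping.keys m. p i ^ Poly_Mapping.lookup m i))"

definition Iv_gens :: "'v set \<Rightarrow> 'v set set \<Rightarrow> nat \<Rightarrow> ('v set \<Rightarrow> label) \<Rightarrow> 'v
    \<Rightarrow> 'k::comm_ring_1 mpoly set" where
  "Iv_gens V E n lab v =
     (if gdeg E v = 3 then
        {Var i | i. i \<le> n \<and>
           (\<forall>j k. lab ` {e \<in> tedges V E. v \<in> e} = {Lab j, Lab k, Dif j k} \<longrightarrow> i \<noteq> j \<and> i \<noteq> k)}
      else
        {Var i | i. i \<le> n \<and> (\<forall>e\<in>tedges V E. v \<in> e \<longrightarrow> i \<notin> lab_idx (lab e))}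
        \<union> {Var j - Var k | j k. \<exists>e\<in>tedges V E. v \<in> e \<and> lab e = Dif j k})"

text \<open>Affine cone (in k^(n+1), coordinates 0..n) over L_v = V(I_v):
  common zeros of the generators.\<close>
definition Lv_cone :: "'v set \<Rightarrow> 'v set set \<Rightarrow> nat \<Rightarrow> ('v set \<Rightarrow> label) \<Rightarrow> 'v
    \<Rightarrow> (nat \<Rightarrow> 'k::comm_ring_1) set" where
  "Lv_cone V E n lab v =
     {p. (\<forall>i>n. p i = 0) \<and> (\<forall>f\<in>(Iv_gens V E n lab v :: 'k mpoly set). eval f p = 0)}"

definition CG_cone :: "'v set \<Rightarrow> 'v set set \<Rightarrow> nat \<Rightarrow> ('v set \<Rightarrow> label)
    \<Rightarrow> (nat \<Rightarrow> 'k::comm_ring_1) set" where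
  "CG_cone V E n lab = (\<Union>v\<in>V. Lv_cone V E n lab v)"

text \<open>Homogeneous ideal I_X of a (reduced) subset X of P^n, given by its cone.\<close>
definition vanishing_ideal :: "nat \<Rightarrow> (nat \<Rightarrow> 'k::comm_ring_1) set \<Rightarrow> 'k mpoly set" where
  "vanishing_ideal n X = {f \<in> polyS n. \<forall>p\<in>X. eval f p = 0}"

text \<open>Koszul complex K(x_0..x_n) over S: a chain in homological degree i is
  c :: nat set \<Rightarrow> poly, supported on i-subsets T of {0..n} (coefficient of e_T).
  Differential: d(e_T) = sum over t in T of (-1)^(#{u in T. u < t}) x_t e_(T-{t}).\<close>

definition kchain :: "nat \<Rightarrow> nat \<Rightarrow> (nat set \<Rightarrow> 'k::comm_ring_1 mpoly) \<Rightarrow> bool" where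
  "kchain n i c \<longleftrightarrow>
     (\<forall>T. c T \<noteq> 0 \<longrightarrow> T \<subseteq> {0..n} \<and> card T = i) \<and> (\<forall>T. c T \<in> polyS n)"

definition kdiff :: "nat \<Rightarrow> (nat set \<Rightarrow> 'k::comm_ring_1 mpoly) \<Rightarrow> nat set \<Rightarrow> 'k mpoly" where
  "kdiff n c U = (if U \<subseteq> {0..n} then
       (\<Sum>t\<in>{0..n} - U. (-1) ^ card {u\<in>U. u < t} * Var t * c (insert t U)) else 0)"

text \<open>beta_{i,j}(S/I) = dim_k Tor_i^S(S/I, k)_j = dim_k H_i(K(x) \<otimes> S/I)_j.
  It is nonzero iff there is a chain c of internal degree j (entries of c
  homogeneous of degree j - i) whose boundary has all entries in I, and which is
  not congruent modulo chains with entries in I to a boundary.\<close>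

definition betti_nonzero :: "nat \<Rightarrow> 'k::comm_ring_1 mpoly set \<Rightarrow> nat \<Rightarrow> nat \<Rightarrow> bool" where
  "betti_nonzero n I i j \<longleftrightarrow>
     (\<exists>c. kchain n i c \<and> i \<le> j \<and> (\<forall>T. homog (j - i) (c T)) \<and>
          (\<forall>U. kdiff n c U \<in> I) \<and>
          \<not> (\<exists>b a. kchain n (i + 1) b \<and> kchain n i a \<and> (\<forall>T. a T \<in> I) \<and>
                  (\<forall>T. c T = kdiff n b T + a T)))"

definition satisfies_N :: "nat \<Rightarrow> 'k::comm_ring_1 mpoly set \<Rightarrow> nat \<Rightarrow> nat \<Rightarrow> bool" where
  "satisfies_N n I k p \<longleftrightarrow>
     (\<forall>i j. 1 \<le> i \<and> i \<le> p \<and> betti_nonzero n I i j \<longrightarrow> j = i + k - 1)"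

end

theory Submission
  imports Defs
begin

text \<open>Let \<open>v_0, \<dots>, v_(m-1)\<close> be a cycle of \<open>G\<close>; consecutive lines \<open>L_(v_(k-1))\<close>, \<open>L_(v_k)\<close>
  meet in a node \<open>P_k\<close> (indices mod \<open>m\<close>), the point \<open>e_i\<close> or \<open>e_j + e_k\<close> read off the label of the edge between
  them.  Condition (4) provides a cycle vertex \<open>v_0\<close> of degree at most 2 whose two edges
  carry single indices \<open>a\<close>, \<open>b\<close>; by (4) and (5), \<open>x_t x_a x_b\<close> vanishes on \<open>C_G\<close> for every \<open>t \<notin> {a, b}\<close>,
  so \<open>x_a x_b e_T\<close> is a Koszul cycle of \<open>S/I\<close> in homological degree \<open>m - 2\<close> and internal
  degree \<open>m\<close> for every \<open>T\<close> of size \<open>m - 2\<close> avoiding \<open>a, b\<close>.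

  It is not a boundary modulo \<open>I\<close>.  Pair the coefficient of \<open>e_T\<close> of a chain with the
  coefficient at \<open>T\<close> of \<open>P_(k+1) \<and> \<dots> \<and> P_(k+m-2)\<close> through the polarization of its quadratic
  part at \<open>(P_(k-1), P_k)\<close>, and sum over \<open>k\<close> with alternating signs.  This functional kills
  chains with coefficients in \<open>I\<close>, since a quadric vanishing on the line through \<open>P_(k-1)\<close> and
  \<open>P_k\<close> has zero polarization there, and it kills Koszul boundaries, where the contributions
  of consecutive \<open>k\<close> cancel.  On \<open>x_a x_b e_T\<close> only the term for the line \<open>L_(v_0)\<close> through
  \<open>P_0 = e_a\<close> and \<open>P_1 = e_b\<close> contributes, giving the coefficient of \<open>P_2 \<and> \<dots> \<and> P_(m-1)\<close> at \<open>T\<close>,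
  which is nonzero for a suitable \<open>T\<close> because the nodes split into blocks of one or two
  vectors with disjoint supports.  Hence \<open>\<beta>_(m-2,m) \<noteq> 0\<close>.\<close>

section \<open>Homogeneous components of polynomials\<close>

abbreviation var_mon :: "nat \<Rightarrow> (nat \<Rightarrow>\<^sub>0 nat)" where
  "var_mon i \<equiv> Poly_Mapping.single i (Suc 0)"

definition mon_eval :: "(nat \<Rightarrow>\<^sub>0 nat) \<Rightarrow> (nat \<Rightarrow> 'k::comm_ring_1) \<Rightarrow> 'k" where
  "mon_eval m p = (\<Prod>i\<in>Poly_Mapping.keys m. p i ^ Poly_Mapping.lookup m i)"

definition hpart_eval :: "nat \<Rightarrow> 'k::comm_ring_1 mpoly \<Rightarrow> (nat \<Rightarrow> 'k) \<Rightarrow> 'k" where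
  "hpart_eval d f p =
     (\<Sum>m\<in>{m\<in>Poly_Mapping.keys f. mdeg m = d}. Poly_Mapping.lookup f m * mon_eval m p)"

lemma eval_eq_sum_mon_eval:
  "eval f p = (\<Sum>m\<in>Poly_Mapping.keys f. Poly_Mapping.lookup f m * mon_eval m p)"
  by (simp add: eval_def mon_eval_def)

lemma eval_superset:
  "finite K \<Longrightarrow> Poly_Mapping.keys f \<subseteq> K \<Longrightarrow>
     eval f p = (\<Sum>m\<in>K. Poly_Mapping.lookup f m * mon_eval m p)"
  unfolding eval_eq_sum_mon_eval by (rule sum.mono_neutral_left) (auto simp: in_keys_iff)

lemma mon_eval_superset:
  "finite K \<Longrightarrow> Poly_Mapping.keys m \<subseteq> K \<Longrightarrow>
     mon_eval m p = (\<Prod>i\<in>K. p i ^ Poly_Mapping.lookup m i)"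
  unfolding mon_eval_def by (rule prod.mono_neutral_left) (auto simp: in_keys_iff)

lemma mdeg_superset:
  "finite K \<Longrightarrow> Poly_Mapping.keys m \<subseteq> K \<Longrightarrow> mdeg m = (\<Sum>i\<in>K. Poly_Mapping.lookup m i)"
  unfolding mdeg_def by (rule sum.mono_neutral_left) (auto simp: in_keys_iff)

lemma hpart_eval_superset:
  "finite K \<Longrightarrow> Poly_Mapping.keys f \<subseteq> K \<Longrightarrow>
     hpart_eval d f p = (\<Sum>m\<in>{m\<in>K. mdeg m = d}. Poly_Mapping.lookup f m * mon_eval m p)"
  unfolding hpart_eval_def by (rule sum.mono_neutral_left) (auto simp: in_keys_iff)

lemma mon_eval_add: "mon_eval (m1 + m2) p = mon_eval m1 p * mon_eval m2 p"
proof -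
  let ?K = "Poly_Mapping.keys m1 \<union> Poly_Mapping.keys m2"
  have "finite ?K" "Poly_Mapping.keys (m1 + m2) \<subseteq> ?K" by (simp_all add: keys_add)
  then show ?thesis
    by (simp add: mon_eval_superset[of ?K] lookup_add power_add prod.distrib)
qed

lemma mdeg_add: "mdeg (m1 + m2) = mdeg m1 + mdeg m2"
proof -
  let ?K = "Poly_Mapping.keys m1 \<union> Poly_Mapping.keys m2"
  have "finite ?K" "Poly_Mapping.keys (m1 + m2) \<subseteq> ?K" by (simp_all add: keys_add)
  then show ?thesis
    by (simp add: mdeg_superset[of ?K] lookup_add sum.distrib)
qed

lemma mon_eval_var_mon [simp]: "mon_eval (var_mon i) p = p i"
  by (simp add: mon_eval_def)

lemma mdeg_var_mon [simp]: "mdeg (var_mon i) = 1"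
  by (simp add: mdeg_def)

lemma mon_eval_scale: "mon_eval m (\<lambda>i. c * p i) = c ^ mdeg m * mon_eval m p"
  by (simp add: mon_eval_def mdeg_def power_mult_distrib prod.distrib power_sum)

lemma mdeg_eq_1_imp_var_mon:
  assumes "mdeg m = 1"
  obtains i where "m = var_mon i"
proof -
  obtain i where i: "i \<in> Poly_Mapping.keys m"
    using assms by (force simp: mdeg_def)
  have split: "mdeg m = Poly_Mapping.lookup m i + (\<Sum>j\<in>Poly_Mapping.keys m - {i}. Poly_Mapping.lookup m j)"
    unfolding mdeg_def using i by (simp add: sum.remove)
  have "Poly_Mapping.lookup m i \<ge> 1"
    using i by (simp add: in_keys_iff)
  then have li: "Poly_Mapping.lookup m i = 1"
    using split assms by linarith
  have "Poly_Mapping.lookup m j = 0" if "j \<noteq> i" for j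
  proof (rule ccontr)
    assume "Poly_Mapping.lookup m j \<noteq> 0"
    with that have "Poly_Mapping.lookup m j \<le> (\<Sum>j\<in>Poly_Mapping.keys m - {i}. Poly_Mapping.lookup m j)"
      by (intro member_le_sum) (auto simp: in_keys_iff)
    with split assms li \<open>Poly_Mapping.lookup m j \<noteq> 0\<close> show False by linarith
  qed
  then have "m = var_mon i"
    using li by (intro poly_mapping_eqI) (auto simp: lookup_single when_def)
  then show ?thesis by (rule that)
qed

lemma eval_add: "eval (f + g) p = eval f p + eval g p"
proof -
  let ?K = "Poly_Mapping.keys f \<union> Poly_Mapping.keys g"
  have "finite ?K" "Poly_Mapping.keys (f + g) \<subseteq> ?K" by (simp_all add: keys_add)
  then show ?thesis
    by (simp add: eval_superset[of ?K] lookup_add sum.distrib algebra_simps)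
qed

lemma eval_uminus: "eval (- f) p = - eval f p"
  by (simp add: eval_eq_sum_mon_eval sum_negf)

lemma eval_diff: "eval (f - g) p = eval f p - eval g p"
  using eval_add[of f "- g" p] by (simp add: eval_uminus)

lemma eval_single_one: "eval (Poly_Mapping.single m (1::'k::comm_ring_1)) p = mon_eval m p"
  by (simp add: eval_eq_sum_mon_eval)

lemma eval_Var [simp]: "eval (Var i :: 'k::comm_ring_1 mpoly) p = p i"
  by (simp add: Var_def eval_single_one)

lemma hpart_eval_add: "hpart_eval d (f + g) p = hpart_eval d f p + hpart_eval d g p"
proof -
  let ?K = "Poly_Mapping.keys f \<union> Poly_Mapping.keys g"
  have "finite ?K" "Poly_Mapping.keys (f + g) \<subseteq> ?K" by (simp_all add: keys_add)
  then show ?thesis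
    by (simp add: hpart_eval_superset[of ?K] lookup_add sum.distrib algebra_simps)
qed

lemma hpart_eval_zero [simp]: "hpart_eval d 0 p = 0"
  by (simp add: hpart_eval_def)

lemma hpart_eval_uminus: "hpart_eval d (- f) p = - hpart_eval d f p"
  by (simp add: hpart_eval_def sum_negf)

lemma hpart_eval_sum: "hpart_eval d (\<Sum>x\<in>S. F x) p = (\<Sum>x\<in>S. hpart_eval d (F x) p)"
  by (induction S rule: infinite_finite_induct) (auto simp: hpart_eval_add)

lemma neg_one_power_mult: "((-1) ^ r * f :: 'k::comm_ring_1 mpoly) = (if even r then f else - f)"
  by (induction r) auto

lemma hpart_eval_neg_one_power: "hpart_eval d ((-1) ^ r * f) p = (-1) ^ r * hpart_eval d f p"
  by (simp add: neg_one_power_mult hpart_eval_uminus)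

lemma lookup_single_one_mult:
  fixes g :: "'a::comm_ring_1 mpoly"
  shows "Poly_Mapping.lookup (Poly_Mapping.single k 1 * g) m =
    (if \<exists>q. m = k + q then Poly_Mapping.lookup g (m - k) else 0)"
proof -
  have lk: "Poly_Mapping.lookup (Poly_Mapping.single k 1 * g) m
      = (\<Sum>q. Poly_Mapping.lookup g q when m = k + q)"
  proof -
    have eq: "(\<lambda>a. (1 when k = a) * (\<Sum>q. Poly_Mapping.lookup g q when m = a + q))
        = (\<lambda>a. if k = a then (\<Sum>q. Poly_Mapping.lookup g q when m = a + q) else 0)"
      by (auto simp: when_def)
    show ?thesis unfolding lookup_mult lookup_single eq by simp
  qed
  show ?thesis
  proof (cases "\<exists>q. m = k + q")
    case True
    then obtain q0 where q0: "m = k + q0" by blast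
    have "(\<lambda>q. Poly_Mapping.lookup g q when m = k + q)
        = (\<lambda>q. if q0 = q then Poly_Mapping.lookup g q else 0)"
      by (auto simp: q0 when_def)
    then show ?thesis using lk q0 by simp
  next
    case False
    then show ?thesis using lk by (simp add: when_def)
  qed
qed

lemma hpart_eval_Var_mult: "hpart_eval (Suc d) (Var t * h) p = p t * hpart_eval d h p"
proof -
  let ?s = "\<lambda>q. var_mon t + q"
  have keys: "Poly_Mapping.keys (Var t * h) \<subseteq> ?s ` Poly_Mapping.keys h"
    by (auto simp: in_keys_iff Var_def lookup_single_one_mult split: if_splits)
  have lk: "Poly_Mapping.lookup (Var t * h) (?s q) = Poly_Mapping.lookup h q" for q
    unfolding Var_def lookup_single_one_mult by auto
  have "hpart_eval (Suc d) (Var t * h) p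
      = (\<Sum>m\<in>{m\<in>?s ` Poly_Mapping.keys h. mdeg m = Suc d}. Poly_Mapping.lookup (Var t * h) m * mon_eval m p)"
    by (rule hpart_eval_superset[OF _ keys]) simp
  also have "{m\<in>?s ` Poly_Mapping.keys h. mdeg m = Suc d} = ?s ` {q\<in>Poly_Mapping.keys h. mdeg q = d}"
    by (auto simp: mdeg_add)
  also have "(\<Sum>m\<in>?s ` {q\<in>Poly_Mapping.keys h. mdeg q = d}. Poly_Mapping.lookup (Var t * h) m * mon_eval m p)
      = (\<Sum>q\<in>{q\<in>Poly_Mapping.keys h. mdeg q = d}. Poly_Mapping.lookup h q * (p t * mon_eval q p))"
    by (subst sum.reindex) (auto intro: inj_onI simp: lk mon_eval_add)
  also have "\<dots> = p t * hpart_eval d h p"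
    by (simp add: hpart_eval_def sum_distrib_left algebra_simps)
  finally show ?thesis .
qed

lemma hpart_eval_1_point_add:
  "hpart_eval 1 h (\<lambda>i. P i + Q i) = hpart_eval 1 h P + hpart_eval 1 h Q"
proof -
  have "mon_eval m (\<lambda>i. P i + Q i) = mon_eval m P + mon_eval m Q" if "mdeg m = 1" for m
    using that by (elim mdeg_eq_1_imp_var_mon) simp
  then show ?thesis by (simp add: hpart_eval_def sum.distrib algebra_simps)
qed

lemma hpart_eval_1_Var: "hpart_eval 1 (Var b :: 'k::comm_ring_1 mpoly) p = p b"
proof -
  have "{m. m = var_mon b \<and> mdeg m = Suc 0} = {var_mon b}" by auto
  then show ?thesis by (simp add: hpart_eval_def Var_def)
qed

lemma eval_scaled_point:
  assumes "\<forall>m\<in>Poly_Mapping.keys f. mdeg m \<le> N"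
  shows "eval f (\<lambda>i. x * p i) = (\<Sum>d\<le>N. hpart_eval d f p * x ^ d)"
proof -
  have "eval f (\<lambda>i. x * p i)
      = (\<Sum>m\<in>Poly_Mapping.keys f. Poly_Mapping.lookup f m * mon_eval m p * x ^ mdeg m)"
    by (simp add: eval_eq_sum_mon_eval mon_eval_scale algebra_simps)
  also have "\<dots> = (\<Sum>d\<le>N. \<Sum>m\<in>{m\<in>Poly_Mapping.keys f. mdeg m = d}.
                      Poly_Mapping.lookup f m * mon_eval m p * x ^ mdeg m)"
    by (rule sum.group[symmetric]) (use assms in auto)
  also have "\<dots> = (\<Sum>d\<le>N. hpart_eval d f p * x ^ d)"
    by (intro sum.cong refl) (simp add: hpart_eval_def sum_distrib_right)
  finally show ?thesis .
qed

lemma hpart_eval_eq_0_if_vanishes_on_line: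
  fixes f :: "'k::field_char_0 mpoly"
  assumes "\<forall>x. eval f (\<lambda>i. x * p i) = 0"
  shows "hpart_eval d f p = 0"
proof -
  define N where "N = (\<Sum>m\<in>Poly_Mapping.keys f. mdeg m) + d"
  have "\<forall>m\<in>Poly_Mapping.keys f. mdeg m \<le> N"
    unfolding N_def using member_le_sum[of _ "Poly_Mapping.keys f" mdeg] by fastforce
  then have "poly (\<Sum>e\<le>N. monom (hpart_eval e f p) e) x = 0" for x
    using assms eval_scaled_point[of f N x p] by (simp add: poly_sum poly_monom)
  then have "(\<Sum>e\<le>N. monom (hpart_eval e f p) e) = 0"
    using poly_all_0_iff_0 by blast
  then have "coeff (\<Sum>e\<le>N. monom (hpart_eval e f p) e) d = 0" by simp
  then show ?thesis by (simp add: coeff_sum coeff_monom N_def)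
qed

lemma polyS_add: "f \<in> polyS n \<Longrightarrow> g \<in> polyS n \<Longrightarrow> f + g \<in> polyS n"
  unfolding polyS_def using keys_add[of f g] by blast

lemma vanishing_ideal_zero: "0 \<in> vanishing_ideal n X"
  by (simp add: vanishing_ideal_def polyS_def eval_def)

lemma vanishing_ideal_add:
  "f \<in> vanishing_ideal n X \<Longrightarrow> g \<in> vanishing_ideal n X \<Longrightarrow> f + g \<in> vanishing_ideal n X"
  by (simp add: vanishing_ideal_def polyS_add eval_add)

lemma vanishing_ideal_neg_one_power:
  "f \<in> vanishing_ideal n X \<Longrightarrow> (-1) ^ r * f \<in> vanishing_ideal n X"
  by (simp add: neg_one_power_mult vanishing_ideal_def polyS_def eval_uminus)

lemma vanishing_ideal_sum:
  "(\<And>t. t \<in> S \<Longrightarrow> F t \<in> vanishing_ideal n X) \<Longrightarrow> (\<Sum>t\<in>S. F t) \<in> vanishing_ideal n X"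
  by (induction S rule: infinite_finite_induct)
     (auto simp: vanishing_ideal_zero vanishing_ideal_add)

lemma monomial_in_vanishing_ideal:
  assumes "Poly_Mapping.keys m \<subseteq> {0..n}" and "\<forall>p\<in>X. mon_eval m p = 0"
  shows "Poly_Mapping.single m (1::'k::comm_ring_1) \<in> vanishing_ideal n X"
  using assms by (simp add: vanishing_ideal_def polyS_def eval_single_one)

text \<open>Polarization of the quadratic part: for a quadratic form \<open>q\<close>, \<open>q(P+Q) - q(P) - q(Q)\<close>
  is twice the associated symmetric bilinear form at \<open>(P, Q)\<close>.\<close>

definition polar2 :: "(nat \<Rightarrow> 'k::comm_ring_1) \<Rightarrow> (nat \<Rightarrow> 'k) \<Rightarrow> 'k mpoly \<Rightarrow> 'k" where
  "polar2 P Q f = hpart_eval 2 f (\<lambda>i. P i + Q i) - hpart_eval 2 f P - hpart_eval 2 f Q"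

lemma polar2_zero [simp]: "polar2 P Q 0 = 0"
  by (simp add: polar2_def)

lemma polar2_add: "polar2 P Q (f + g) = polar2 P Q f + polar2 P Q g"
  by (simp add: polar2_def hpart_eval_add)

lemma polar2_sum: "polar2 P Q (\<Sum>x\<in>S. F x) = (\<Sum>x\<in>S. polar2 P Q (F x))"
  by (simp add: polar2_def hpart_eval_sum sum_subtractf)

lemma polar2_neg_one_power: "polar2 P Q ((-1) ^ r * f) = (-1) ^ r * polar2 P Q f"
  by (simp only: polar2_def hpart_eval_neg_one_power) (simp add: algebra_simps)

lemma polar2_Var_mult: "polar2 P Q (Var t * h) = P t * hpart_eval 1 h Q + Q t * hpart_eval 1 h P"
proof -
  have eq: "hpart_eval 2 (Var t * h) p = p t * hpart_eval 1 h p" for p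
    using hpart_eval_Var_mult[of 1 t h] by (simp add: numeral_2_eq_2)
  show ?thesis
    unfolding polar2_def by (simp only: eq hpart_eval_1_point_add) (simp add: algebra_simps)
qed

lemma polar2_Var_Var: "polar2 P Q (Var a * Var b) = P a * Q b + Q a * P b"
  by (simp only: polar2_Var_mult hpart_eval_1_Var)

lemma polar2_vanishing_ideal:
  fixes f :: "'k::field_char_0 mpoly"
  assumes "f \<in> vanishing_ideal n X"
    and "\<And>x. (\<lambda>i. x * P i) \<in> X" "\<And>x. (\<lambda>i. x * Q i) \<in> X" "\<And>x. (\<lambda>i. x * (P i + Q i)) \<in> X"
  shows "polar2 P Q f = 0"
  using assms unfolding vanishing_ideal_def polar2_def
  by (simp add: hpart_eval_eq_0_if_vanishes_on_line)

section \<open>Exterior products\<close>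

text \<open>Exterior forms over \<open>k^(n+1)\<close> are coefficient functions on index sets; \<open>wedge v W\<close> is
  \<open>v \<and> W\<close>, with the sign convention of the Koszul differential \<open>kdiff\<close>.\<close>

definition count_below :: "nat set \<Rightarrow> nat \<Rightarrow> nat" where
  "count_below U t = card {u\<in>U. u < t}"

definition wedge :: "(nat \<Rightarrow> 'k::comm_ring_1) \<Rightarrow> (nat set \<Rightarrow> 'k) \<Rightarrow> nat set \<Rightarrow> 'k" where
  "wedge v W U = (\<Sum>t\<in>U. (-1) ^ count_below U t * v t * W (U - {t}))"

fun wedge_list :: "(nat \<Rightarrow> 'k::comm_ring_1) list \<Rightarrow> nat set \<Rightarrow> 'k" where
  "wedge_list [] = (\<lambda>S. if S = {} then 1 else 0)"
| "wedge_list (v # L) = wedge v (wedge_list L)"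

definition unit_vec :: "nat \<Rightarrow> nat \<Rightarrow> 'k::comm_ring_1" where
  "unit_vec c = (\<lambda>i. if i = c then 1 else 0)"

lemma count_below_remove_less:
  "finite U \<Longrightarrow> s \<in> U \<Longrightarrow> s < t \<Longrightarrow> count_below U t = Suc (count_below (U - {s}) t)"
proof -
  assume a: "finite U" "s \<in> U" "s < t"
  then have "{u\<in>U. u < t} = insert s {u\<in>U - {s}. u < t}" by auto
  then show ?thesis unfolding count_below_def using a by simp
qed

lemma count_below_remove_ge: "t \<le> s \<Longrightarrow> count_below (U - {s}) t = count_below U t"
  unfolding count_below_def by (rule arg_cong[where f = card]) auto

lemma count_below_insert_self: "count_below (insert t T) t = card {u\<in>T. u < t}"
  unfolding count_below_def by (rule arg_cong[where f = card]) auto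

lemma count_below_sign_swap:
  assumes "finite U" "t \<in> U" "s \<in> U" "s \<noteq> t"
  shows "((-1) ^ (count_below U t + count_below (U - {t}) s) :: 'k::comm_ring_1)
       = - ((-1) ^ (count_below U s + count_below (U - {s}) t))"
proof (cases "s < t")
  case True
  then have "count_below U t = Suc (count_below (U - {s}) t)" "count_below (U - {t}) s = count_below U s"
    using count_below_remove_less count_below_remove_ge assms by auto
  then show ?thesis by (simp add: algebra_simps)
next
  case False
  then have "t < s" using assms by simp
  then have "count_below U s = Suc (count_below (U - {t}) s)" "count_below (U - {s}) t = count_below U t"
    using count_below_remove_less count_below_remove_ge assms by auto
  then show ?thesis by (simp add: algebra_simps)
qed

lemma wedge_infinite: "\<not> finite U \<Longrightarrow> wedge v W U = 0"
  by (simp add: wedge_def)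

lemma wedge_wedge_expand:
  "wedge x (wedge y W) U = (\<Sum>t\<in>U. \<Sum>s\<in>{s\<in>U. s \<noteq> t}.
      (-1) ^ (count_below U t + count_below (U - {t}) s) * x t * y s * W (U - {t} - {s}))"
proof -
  have "{s\<in>U. s \<noteq> t} = U - {t}" for t by auto
  then show ?thesis unfolding wedge_def
    by (intro sum.cong refl) (simp add: sum_distrib_left power_add algebra_simps)
qed

lemma wedge_anticomm: "wedge x (wedge y W) U = - wedge y (wedge x W) U"
proof (cases "finite U")
  case False
  then show ?thesis by (simp add: wedge_infinite)
next
  case fin: True
  have "wedge x (wedge y W) U = (\<Sum>s\<in>U. \<Sum>t\<in>{t\<in>U. s \<noteq> t}.
      (-1) ^ (count_below U t + count_below (U - {t}) s) * x t * y s * W (U - {t} - {s}))"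
    unfolding wedge_wedge_expand by (rule sum.swap_restrict[OF fin fin])
  also have "\<dots> = (\<Sum>s\<in>U. \<Sum>t\<in>{t\<in>U. t \<noteq> s}.
      - ((-1) ^ (count_below U s + count_below (U - {s}) t) * y s * x t * W (U - {s} - {t})))"
  proof (intro sum.cong refl)
    fix s t assume "s \<in> U" "t \<in> {t\<in>U. t \<noteq> s}"
    then have "U - {t} - {s} = U - {s} - {t}"
      and "((-1) ^ (count_below U t + count_below (U - {t}) s) :: 'a)
         = - ((-1) ^ (count_below U s + count_below (U - {s}) t))"
      using count_below_sign_swap[OF fin] by auto
    then show "(-1) ^ (count_below U t + count_below (U - {t}) s) * x t * y s * W (U - {t} - {s}) =
      - ((-1) ^ (count_below U s + count_below (U - {s}) t) * y s * x t * W (U - {s} - {t}))"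
      by (simp add: algebra_simps)
  qed auto
  also have "\<dots> = - wedge y (wedge x W) U"
    unfolding wedge_wedge_expand by (simp add: sum_negf)
  finally show ?thesis .
qed

lemma wedge_scale: "wedge v (\<lambda>S. c * W S) U = c * wedge v W U"
  by (simp add: wedge_def sum_distrib_left algebra_simps)

lemma wedge_list_rotate: "wedge_list (x # L) S = (-1) ^ length L * wedge_list (L @ [x]) S"
proof (induction L arbitrary: S)
  case Nil
  then show ?case by simp
next
  case (Cons y L)
  have "wedge_list (x # y # L) S = - wedge y (wedge_list (x # L)) S"
    using wedge_anticomm[of x y "wedge_list L" S] by simp
  also have "wedge_list (x # L) = (\<lambda>S. (-1) ^ length L * wedge_list (L @ [x]) S)"
    using Cons by (intro ext) simp
  finally show ?case by (simp add: wedge_scale)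
qed

lemma wedge_nonzero_imp:
  assumes "wedge v W U \<noteq> 0"
  shows "finite U \<and> (\<exists>t\<in>U. v t \<noteq> 0 \<and> W (U - {t}) \<noteq> 0)"
proof -
  have "finite U" using assms wedge_infinite by blast
  moreover obtain t where "t \<in> U" "(-1) ^ count_below U t * v t * W (U - {t}) \<noteq> 0"
    using assms unfolding wedge_def using sum.neutral by force
  ultimately show ?thesis by (metis mult_zero_left mult_zero_right)
qed

lemma wedge_list_nonzero_imp:
  "wedge_list L S \<noteq> 0 \<Longrightarrow>
     finite S \<and> card S = length L \<and> S \<subseteq> (\<Union>v\<in>set L. {i. v i \<noteq> 0})"
proof (induction L arbitrary: S)
  case Nil
  then show ?case by (simp split: if_splits)
next
  case (Cons v L)
  then obtain t where t: "finite S" "t \<in> S" "v t \<noteq> 0" "wedge_list L (S - {t}) \<noteq> 0"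
    using wedge_nonzero_imp[of v "wedge_list L" S] by auto
  moreover have "card S > 0" using t by (auto simp: card_gt_0_iff)
  ultimately show ?case using Cons.IH[OF t(4)]
    by (auto simp: card_Diff_singleton_if split: if_splits)
qed

lemma wedge_unit_vec_nonzero_imp: "wedge (unit_vec c) W U \<noteq> 0 \<Longrightarrow> c \<in> U \<and> W (U - {c}) \<noteq> 0"
  using wedge_nonzero_imp[of "unit_vec c" W U] by (auto simp: unit_vec_def split: if_splits)

lemma wedge_single_support:
  assumes "finite C" "c \<notin> C" "\<forall>i. i \<noteq> c \<longrightarrow> x i = 0"
  shows "wedge x W (insert c C) = (-1) ^ count_below (insert c C) c * x c * W C"
proof -
  have "wedge x W (insert c C) = (\<Sum>t\<in>{c}. (-1) ^ count_below (insert c C) t * x t * W (insert c C - {t}))"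
    unfolding wedge_def using assms by (intro sum.mono_neutral_right) auto
  then show ?thesis using assms(2) by simp
qed

lemma wedge_list_pair_support:
  fixes x y :: "nat \<Rightarrow> 'k::comm_ring_1"
  assumes "finite C" "j \<noteq> k" "j \<notin> C" "k \<notin> C" "\<forall>i. i \<noteq> j \<and> i \<noteq> k \<longrightarrow> x i = 0 \<and> y i = 0"
  defines "S \<equiv> insert j (insert k C)"
  shows "wedge_list (x # y # L) S
       = (-1) ^ (count_below S j + count_below (S - {j}) k) * (x j * y k - x k * y j) * wedge_list L C"
proof -
  let ?sgn = "\<lambda>u v. (-1) ^ (count_below S u + count_below (S - {u}) v) :: 'k"
  have fin: "finite S" using assms(1) by (simp add: S_def)
  have C: "S - {j} - {k} = C" "S - {k} - {j} = C" using assms(2-4) by (auto simp: S_def)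
  have in1: "wedge y (wedge_list L) (S - {j})
      = (\<Sum>s\<in>{k}. (-1) ^ count_below (S - {j}) s * y s * wedge_list L (S - {j} - {s}))"
    unfolding wedge_def using fin assms(2,5) by (intro sum.mono_neutral_right) (auto simp: S_def)
  have in2: "wedge y (wedge_list L) (S - {k})
      = (\<Sum>s\<in>{j}. (-1) ^ count_below (S - {k}) s * y s * wedge_list L (S - {k} - {s}))"
    unfolding wedge_def using fin assms(2,5) by (intro sum.mono_neutral_right) (auto simp: S_def)
  have "wedge_list (x # y # L) S
      = (\<Sum>t\<in>{j, k}. (-1) ^ count_below S t * x t * wedge y (wedge_list L) (S - {t}))"
    unfolding wedge_list.simps wedge_def[of x] using fin assms(5)
    by (intro sum.mono_neutral_right) (auto simp: S_def)
  also have "\<dots> = (-1) ^ count_below S j * x j * wedge y (wedge_list L) (S - {j})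
                 + (-1) ^ count_below S k * x k * wedge y (wedge_list L) (S - {k})"
    using assms(2) by simp
  also have "\<dots> = ?sgn j k * x j * y k * wedge_list L C + ?sgn k j * x k * y j * wedge_list L C"
    unfolding in1 in2 using C by (simp add: power_add algebra_simps)
  also have "?sgn k j = - ?sgn j k"
    using count_below_sign_swap[OF fin, of k j] assms(2) by (simp add: S_def)
  finally show ?thesis by (simp add: algebra_simps)
qed

inductive block_independent :: "(nat \<Rightarrow> 'k::comm_ring_1) list \<Rightarrow> nat set \<Rightarrow> bool" where
  nil: "block_independent [] {}"
| single: "x c \<noteq> 0 \<Longrightarrow> (\<forall>i. i \<noteq> c \<longrightarrow> x i = 0) \<Longrightarrow> c \<notin> C \<Longrightarrow> block_independent L C \<Longrightarrow>
     block_independent (x # L) (insert c C)"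
| pair: "j \<noteq> k \<Longrightarrow> j \<notin> C \<Longrightarrow> k \<notin> C \<Longrightarrow> (\<forall>i. i \<noteq> j \<and> i \<noteq> k \<longrightarrow> x i = 0 \<and> y i = 0) \<Longrightarrow>
     x j * y k \<noteq> x k * y j \<Longrightarrow> block_independent L C \<Longrightarrow>
     block_independent (x # y # L) (insert j (insert k C))"

lemma block_independent_wedge_list_nonzero:
  fixes L :: "(nat \<Rightarrow> 'k::idom) list"
  shows "block_independent L C \<Longrightarrow> finite C \<and> wedge_list L C \<noteq> 0"
proof (induction rule: block_independent.induct)
  case nil
  then show ?case by simp
next
  case (single x c C L)
  then show ?case by (simp add: wedge_single_support)
next
  case (pair j k C x y L)
  then show ?case
    using wedge_list_pair_support[of C j k x y L] by (simp del: wedge_list.simps)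
qed

section \<open>A functional on Koszul chains\<close>

text \<open>For points \<open>N k\<close> indexed mod \<open>m\<close> (the nodes of a cycle of lines), the \<open>k\<close>-th term
  of the functional polarizes at the two nodes \<open>N (k - 1)\<close>, \<open>N k\<close> on the \<open>k\<close>-th line and is
  weighted by the signed wedge of the other \<open>m - 2\<close> nodes.\<close>

definition cycle_weight :: "nat \<Rightarrow> (nat \<Rightarrow> nat \<Rightarrow> 'k::comm_ring_1) \<Rightarrow> nat \<Rightarrow> nat set \<Rightarrow> 'k" where
  "cycle_weight m N k =
     (\<lambda>S. (-1) ^ ((m - 1) * k) * wedge_list (map (\<lambda>i. N (k + 1 + i)) [0..<m - 2]) S)"

definition cycle_functional ::
    "nat \<Rightarrow> nat \<Rightarrow> (nat \<Rightarrow> nat \<Rightarrow> 'k::comm_ring_1) \<Rightarrow> (nat set \<Rightarrow> 'k mpoly) \<Rightarrow> 'k" where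
  "cycle_functional n m N c =
     (\<Sum>k<m. \<Sum>T\<in>Pow {0..n}. cycle_weight m N k T * polar2 (N (k + m - 1)) (N k) (c T))"

lemma cycle_weight_cocycle:
  assumes "m \<ge> 2"
  shows "wedge (N (k + m - 1)) (cycle_weight m N k) U
       + wedge (N (k + 1)) (cycle_weight m N (k + 1)) U = 0"
proof -
  let ?L = "map (\<lambda>i. N (k + 1 + i)) [0..<Suc (m - 2)]"
  have "N (k + m - 1) = N (k + 1 + (m - 2))"
    using assms by (intro arg_cong[where f = N]) arith
  then have last: "map (\<lambda>i. N (k + 1 + i)) [0..<m - 2] @ [N (k + m - 1)] = ?L"
    by simp
  have first: "N (k + 1) # map (\<lambda>i. N (k + 1 + 1 + i)) [0..<m - 2] = ?L"
    by (simp add: map_upt_Suc del: upt_Suc)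
  have A: "wedge (N (k + m - 1)) (cycle_weight m N k) U
      = (-1) ^ ((m - 1) * k) * ((-1) ^ (m - 2) * wedge_list ?L U)"
    unfolding cycle_weight_def wedge_scale
    using wedge_list_rotate[of "N (k + m - 1)" "map (\<lambda>i. N (k + 1 + i)) [0..<m - 2]" U] last
    by simp
  have B: "wedge (N (k + 1)) (cycle_weight m N (k + 1)) U = (-1) ^ ((m - 1) * (k + 1)) * wedge_list ?L U"
    unfolding cycle_weight_def wedge_scale using first by (metis wedge_list.simps(2))
  have "m - 1 = Suc (m - 2)" using assms by arith
  then have "(m - 1) * (k + 1) = (m - 1) * k + Suc (m - 2)"
    by (metis distrib_left mult_1_right)
  then have "((-1) :: 'a) ^ ((m - 1) * (k + 1)) = - ((-1) ^ ((m - 1) * k) * (-1) ^ (m - 2))"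
    by (simp only: power_add power_Suc) simp
  then show ?thesis unfolding A B by (simp add: algebra_simps)
qed

lemma cycle_weight_periodic:
  assumes "\<And>i. N (i + m) = N i"
  shows "cycle_weight m N (k + m) = cycle_weight m N k"
proof -
  have "(m - 1) * (k + m) = (m - 1) * k + (m - 1) * m" by (simp add: distrib_left)
  moreover have "even ((m - 1) * m)" by simp
  ultimately have "((-1)::'a) ^ ((m - 1) * (k + m)) = (-1) ^ ((m - 1) * k)"
    by (simp add: power_add)
  moreover have "N (k + m + 1 + i) = N (k + 1 + i)" for i
    using assms by (metis add.assoc add.commute)
  ultimately show ?thesis unfolding cycle_weight_def by simp
qed

lemma sum_Pow_insert_reindex:
  assumes "finite A"
  shows "(\<Sum>T\<in>Pow A. \<Sum>t\<in>A - T. G T t) = (\<Sum>U\<in>Pow A. \<Sum>t\<in>U. G (U - {t}) t)"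
proof -
  have fin: "\<forall>T\<in>Pow A. finite (A - T)" "\<forall>U\<in>Pow A. finite U"
    using assms by (auto intro: finite_subset)
  have "(\<Sum>T\<in>Pow A. \<Sum>t\<in>A - T. G T t) = (\<Sum>(T, t)\<in>Sigma (Pow A) (\<lambda>T. A - T). G T t)"
    using assms fin by (simp add: sum.Sigma)
  also have "\<dots> = (\<Sum>(U, t)\<in>Sigma (Pow A) (\<lambda>U. U). G (U - {t}) t)"
    by (rule sum.reindex_bij_witness[where i = "\<lambda>(U, t). (U - {t}, t)" and j = "\<lambda>(T, t). (insert t T, t)"])
       (auto simp: insert_absorb)
  also have "\<dots> = (\<Sum>U\<in>Pow A. \<Sum>t\<in>U. G (U - {t}) t)"
    using assms fin by (simp add: sum.Sigma)
  finally show ?thesis .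
qed

lemma sum_lessThan_shift_periodic:
  fixes f :: "nat \<Rightarrow> 'a::cancel_comm_monoid_add"
  assumes "f m = f 0"
  shows "(\<Sum>k<m. f k) = (\<Sum>k<m. f (Suc k))"
proof -
  have "f 0 + (\<Sum>k<m. f (Suc k)) = (\<Sum>k<Suc m. f k)"
    by (rule sum.lessThan_Suc_shift[symmetric])
  also have "\<dots> = (\<Sum>k<m. f k) + f 0"
    using assms by simp
  finally show ?thesis by (simp add: add.commute)
qed

text \<open>Summation by parts: pairing a Koszul boundary with the weight of \<open>T\<close> amounts to pairing
  the chain with the wedge of the weight and the point.\<close>

lemma sum_weight_polar2_kdiff:
  "(\<Sum>T\<in>Pow {0..n}. W T * polar2 P Q (kdiff n b T))
 = (\<Sum>U\<in>Pow {0..n}. wedge P W U * hpart_eval 1 (b U) Q + wedge Q W U * hpart_eval 1 (b U) P)"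
proof -
  let ?F = "\<lambda>U p. hpart_eval 1 (b U) p"
  let ?G = "\<lambda>U t. W (U - {t}) * ((-1) ^ count_below U t * (P t * ?F U Q + Q t * ?F U P))"
  have "(\<Sum>T\<in>Pow {0..n}. W T * polar2 P Q (kdiff n b T))
      = (\<Sum>T\<in>Pow {0..n}. \<Sum>t\<in>{0..n} - T. ?G (insert t T) t)"
    by (intro sum.cong refl)
       (auto simp: kdiff_def polar2_sum mult.assoc polar2_neg_one_power polar2_Var_mult
                   count_below_insert_self sum_distrib_left insert_absorb)
  also have "\<dots> = (\<Sum>U\<in>Pow {0..n}. \<Sum>t\<in>U. ?G U t)"
    using sum_Pow_insert_reindex[of "{0..n}" "\<lambda>T t. ?G (insert t T) t"] by (simp add: insert_absorb)
  also have "\<dots> = (\<Sum>U\<in>Pow {0..n}. wedge P W U * ?F U Q + wedge Q W U * ?F U P)"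
  proof (intro sum.cong refl)
    fix U
    have "wedge P W U * ?F U Q + wedge Q W U * ?F U P
        = (\<Sum>t\<in>U. (-1) ^ count_below U t * P t * W (U - {t}) * ?F U Q
                  + (-1) ^ count_below U t * Q t * W (U - {t}) * ?F U P)"
      unfolding wedge_def by (simp add: sum_distrib_right sum.distrib)
    then show "(\<Sum>t\<in>U. ?G U t) = wedge P W U * ?F U Q + wedge Q W U * ?F U P"
      by (simp add: algebra_simps)
  qed
  finally show ?thesis .
qed

text \<open>The cocycle identity makes the contributions of consecutive terms telescope.\<close>

lemma cycle_functional_kdiff:
  assumes "m \<ge> 2" and periodic: "\<And>i. N (i + m) = N i"
  shows "cycle_functional n m N (kdiff n b) = 0"
proof -
  let ?W = "cycle_weight m N"
  let ?P = "\<lambda>k. N (k + m - 1)"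
  let ?F = "\<lambda>U p. hpart_eval 1 (b U) p"
  have telescope: "(\<Sum>k<m. wedge (?P k) (?W k) U * ?F U (N k) + wedge (N k) (?W k) U * ?F U (?P k)) = 0"
    for U
  proof -
    let ?B = "\<lambda>k. wedge (N k) (?W k) U * ?F U (?P k)"
    have "?P m = ?P 0" using periodic[of "m - 1"] assms(1) by (simp add: add.commute)
    moreover have "?W m = ?W 0"
      using cycle_weight_periodic[of N m 0] periodic by simp
    ultimately have "?B m = ?B 0" using periodic[of 0] by simp
    then have shift: "(\<Sum>k<m. ?B k) = (\<Sum>k<m. ?B (Suc k))"
      by (rule sum_lessThan_shift_periodic)
    have P_Suc: "?P (Suc k) = N k" for k
      using periodic by simp
    have "(\<Sum>k<m. wedge (?P k) (?W k) U * ?F U (N k) + ?B k)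
        = (\<Sum>k<m. (wedge (?P k) (?W k) U + wedge (N (k + 1)) (?W (k + 1)) U) * ?F U (N k))"
      by (simp only: sum.distrib shift) (simp add: sum.distrib[symmetric] algebra_simps P_Suc periodic)
    also have "\<dots> = 0"
      using cycle_weight_cocycle[OF assms(1), of N _ U] by (intro sum.neutral ballI) simp
    finally show ?thesis .
  qed
  have "cycle_functional n m N (kdiff n b)
      = (\<Sum>k<m. \<Sum>U\<in>Pow {0..n}. wedge (?P k) (?W k) U * ?F U (N k) + wedge (N k) (?W k) U * ?F U (?P k))"
    unfolding cycle_functional_def by (simp only: sum_weight_polar2_kdiff)
  also have "\<dots> = 0"
    by (subst sum.swap, rule sum.neutral) (use telescope in simp)
  finally show ?thesis .
qed

lemma cycle_functional_add:
  "cycle_functional n m N (\<lambda>T. x T + y T) = cycle_functional n m N x + cycle_functional n m N y"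
  by (simp add: cycle_functional_def polar2_add distrib_left sum.distrib)

lemma cycle_functional_eq_0:
  assumes "\<And>k T. k < m \<Longrightarrow> polar2 (N (k + m - 1)) (N k) (c T) = 0"
  shows "cycle_functional n m N c = 0"
  using assms by (simp add: cycle_functional_def)

lemma cycle_functional_single:
  assumes "T0 \<subseteq> {0..n}" "\<kappa> < m"
    and "\<And>k. k < m \<Longrightarrow> polar2 (N (k + m - 1)) (N k) f = (if k = \<kappa> then 1 else 0)"
  shows "cycle_functional n m N (\<lambda>T. if T = T0 then f else 0) = cycle_weight m N \<kappa> T0"
proof -
  have "cycle_functional n m N (\<lambda>T. if T = T0 then f else 0)
      = (\<Sum>k<m. cycle_weight m N k T0 * polar2 (N (k + m - 1)) (N k) f)"
    unfolding cycle_functional_def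
  proof (intro sum.cong refl)
    fix k
    show "(\<Sum>T\<in>Pow {0..n}. cycle_weight m N k T * polar2 (N (k + m - 1)) (N k) (if T = T0 then f else 0))
        = cycle_weight m N k T0 * polar2 (N (k + m - 1)) (N k) f"
      using assms(1) by (subst sum.mono_neutral_right[of _ "{T0}"]) auto
  qed
  also have "\<dots> = (\<Sum>k<m. if k = \<kappa> then cycle_weight m N k T0 else 0)"
    using assms(3) by (intro sum.cong refl) simp
  finally show ?thesis using assms(2) by simp
qed

lemma cycle_functional_nonzero_imp_not_boundary:
  assumes "m \<ge> 2" "\<And>i. N (i + m) = N i"
    and "\<And>k f. k < m \<Longrightarrow> f \<in> I \<Longrightarrow> polar2 (N (k + m - 1)) (N k) f = 0"
    and "cycle_functional n m N c \<noteq> 0"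
  shows "\<not> (\<exists>b a. (\<forall>T. a T \<in> I) \<and> (\<forall>T. c T = kdiff n b T + a T))"
proof
  assume "\<exists>b a. (\<forall>T. a T \<in> I) \<and> (\<forall>T. c T = kdiff n b T + a T)"
  then obtain b a where "\<forall>T. a T \<in> I" "c = (\<lambda>T. kdiff n b T + a T)" by blast
  then have "cycle_functional n m N c = cycle_functional n m N (kdiff n b) + cycle_functional n m N a"
    by (simp add: cycle_functional_add)
  also have "\<dots> = 0"
    using cycle_functional_kdiff[of m N n b] cycle_functional_eq_0[of m N a n] assms(1-3)
      \<open>\<forall>T. a T \<in> I\<close> by simp
  finally show False using assms(4) by simp
qed

section \<open>The lines of the arrangement\<close>

lemma Iv_gens_eval_linear:
  assumes "g \<in> Iv_gens V E n lab v"
  shows "eval g (\<lambda>i. p i + q i) = eval g p + eval g q" and "eval g (\<lambda>i. x * p i) = x * eval g p"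
proof -
  have "(\<exists>i. g = Var i) \<or> (\<exists>j k. g = Var j - Var k)"
    using assms unfolding Iv_gens_def by (auto split: if_splits)
  then show "eval g (\<lambda>i. p i + q i) = eval g p + eval g q" "eval g (\<lambda>i. x * p i) = x * eval g p"
    by (elim disjE exE; simp only: eval_diff eval_Var; simp add: algebra_simps)+
qed

lemma Lv_cone_add:
  fixes p q :: "nat \<Rightarrow> 'k::comm_ring_1"
  assumes "p \<in> Lv_cone V E n lab v" "q \<in> Lv_cone V E n lab v"
  shows "(\<lambda>i. p i + q i) \<in> Lv_cone V E n lab v"
  using assms by (simp add: Lv_cone_def Iv_gens_eval_linear)

lemma Lv_cone_scale:
  fixes p :: "nat \<Rightarrow> 'k::comm_ring_1"
  assumes "p \<in> Lv_cone V E n lab v"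
  shows "(\<lambda>i. x * p i) \<in> Lv_cone V E n lab v"
  using assms by (simp add: Lv_cone_def Iv_gens_eval_linear)

lemma Lv_cone_Var:
  fixes p :: "nat \<Rightarrow> 'k::comm_ring_1"
  assumes "p \<in> Lv_cone V E n lab v" "(Var i :: 'k mpoly) \<in> Iv_gens V E n lab v"
  shows "p i = 0"
proof -
  have "\<forall>f\<in>(Iv_gens V E n lab v :: 'k mpoly set). eval f p = 0"
    using assms(1) unfolding Lv_cone_def by simp
  then have "eval (Var i :: 'k mpoly) p = 0" using assms(2) by (rule bspec)
  then show ?thesis by simp
qed

text \<open>The node \<open>L_u \<inter> L_w\<close> of the lines of the two ends of an edge labelled \<open>e_i\<close> is the
  coordinate point \<open>e_i\<close>; for the label \<open>e_j - e_k\<close> it is \<open>e_j + e_k\<close>, which lies on the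
  hyperplane \<open>x_j = x_k\<close>.\<close>

fun label_point :: "label \<Rightarrow> nat \<Rightarrow> 'k::comm_ring_1" where
  "label_point (Lab i) = unit_vec i"
| "label_point (Dif j k) = (\<lambda>x. if x = j \<or> x = k then 1 else 0)"

lemma label_point_nonzero_imp: "label_point l i \<noteq> (0::'k::comm_ring_1) \<Longrightarrow> i \<in> lab_idx l"
  by (cases l) (auto simp: unit_vec_def split: if_splits)

lemma label_point_outside:
  "l \<in> {Lab j, Lab k, Dif j k} \<Longrightarrow> i \<noteq> j \<Longrightarrow> i \<noteq> k \<Longrightarrow> (label_point l i :: 'k::comm_ring_1) = 0"
  by (auto simp: unit_vec_def)

lemma label_point_pair_minor:
  assumes "j \<noteq> k" "l1 \<in> {Lab j, Lab k, Dif j k}" "l2 \<in> {Lab j, Lab k, Dif j k}" "l1 \<noteq> l2"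
  shows "(label_point l1 j * label_point l2 k :: 'k::{comm_ring_1, ring_char_0})
       \<noteq> label_point l1 k * label_point l2 j"
proof -
  have u: "unit_vec j j = (1::'k)" "unit_vec j k = (0::'k)" "unit_vec k k = (1::'k)" "unit_vec k j = (0::'k)"
    using assms(1) by (auto simp: unit_vec_def)
  from assms(2-4) consider "l1 = Lab j" "l2 = Lab k" | "l1 = Lab j" "l2 = Dif j k"
    | "l1 = Lab k" "l2 = Lab j" | "l1 = Lab k" "l2 = Dif j k"
    | "l1 = Dif j k" "l2 = Lab j" | "l1 = Dif j k" "l2 = Lab k"
    by blast
  then show ?thesis by cases (simp_all add: u assms(1))
qed


locale labeled_graph =
  fixes V :: "'v set" and E :: "'v set set" and n :: nat and lab :: "'v set \<Rightarrow> label"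
  assumes G: "graph_conditions V E" and adm: "admissible V E n lab"
begin

abbreviation "deg3 x \<equiv> gdeg E x = 3"
abbreviation "TE \<equiv> tedges V E"

lemma edge_subset_card2: "e \<in> E \<Longrightarrow> e \<subseteq> V \<and> card e = 2"
  using G by (simp add: graph_conditions_def graph_def)

lemma finite_E: "finite E"
proof -
  have "E \<subseteq> Pow V" using edge_subset_card2 by auto
  moreover have "finite V" using G by (simp add: graph_conditions_def graph_def)
  ultimately show ?thesis by (meson finite_Pow_iff finite_subset)
qed

lemma adjD: "adj E x y \<Longrightarrow> x \<noteq> y \<and> {x, y} \<in> E \<and> x \<in> V \<and> y \<in> V"
  using edge_subset_card2[of "{x, y}"] by (auto simp: adj_def card_2_iff doubleton_eq_iff)

lemma adj_sym: "adj E x y \<Longrightarrow> adj E y x"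
  by (simp add: adj_def insert_commute)

lemma deg_le_3: "x \<in> V \<Longrightarrow> gdeg E x \<le> 3"
  using G by (simp add: graph_conditions_def)

lemma deg3_walk_length:
  assumes "walk V E ws" "deg3 (hd ws)" "deg3 (last ws)" "hd ws \<noteq> last ws"
  shows "length ws - 1 \<ge> 3"
proof -
  have "deg3_far V E" using G by (simp add: graph_conditions_def)
  moreover have "hd ws \<in> V" "last ws \<in> V" using assms(1) by (auto simp: walk_def)
  ultimately show ?thesis using assms unfolding deg3_far_def by blast
qed

lemma deg3_not_adj: "adj E x y \<Longrightarrow> deg3 x \<Longrightarrow> deg3 y \<Longrightarrow> False"
  using deg3_walk_length[of "[x, y]"] adjD[of x y]
  by (auto simp: walk_def nth_Cons split: nat.splits)

lemma deg3_no_common_nbr: "adj E x y \<Longrightarrow> adj E y z \<Longrightarrow> x \<noteq> z \<Longrightarrow> deg3 x \<Longrightarrow> deg3 z \<Longrightarrow> False"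
  using deg3_walk_length[of "[x, y, z]"] adjD[of x y] adjD[of y z]
  by (auto simp: walk_def nth_Cons less_Suc_eq split: nat.splits)

lemma no_triangle: "adj E x y \<Longrightarrow> adj E y z \<Longrightarrow> adj E x z \<Longrightarrow> False"
  using G adjD[of x y] adjD[of y z] unfolding graph_conditions_def triangle_free_def by blast

lemma tedge_cases: "e \<in> TE \<Longrightarrow> e \<in> E \<or> (\<exists>y. e = {y} \<and> y \<in> V \<and> gdeg E y = 1)"
  by (auto simp: tedges_def)

lemma tedges_at_nonleaf: "gdeg E w \<noteq> 1 \<Longrightarrow> {e \<in> TE. w \<in> e} = {e \<in> E. w \<in> e}"
  by (auto simp: tedges_def)

lemma tedge_doubleton: "e \<in> TE \<Longrightarrow> u \<in> e \<Longrightarrow> x \<in> e \<Longrightarrow> u \<noteq> x \<Longrightarrow> e = {u, x} \<and> e \<in> E"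
proof -
  assume a: "e \<in> TE" "u \<in> e" "x \<in> e" "u \<noteq> x"
  then have "e \<in> E" using tedge_cases by auto
  then have "finite e" "card e = 2" using edge_subset_card2 by (auto intro: card_ge_0_finite)
  moreover have "{u, x} \<subseteq> e" "card {u, x} = 2" using a by auto
  ultimately have "{u, x} = e" by (metis card_seteq order_refl)
  with \<open>e \<in> E\<close> show ?thesis by simp
qed

lemma tedges_common_vertex:
  assumes "e \<in> TE" "e' \<in> TE" "e \<noteq> e'" "u \<in> e" "u \<in> e'" "x \<in> e" "x \<in> e'"
  shows "x = u"
proof (rule ccontr)
  assume "x \<noteq> u"
  then have "e = {u, x}" "e' = {u, x}" using tedge_doubleton assms by blast+
  with assms(3) show False by simp
qed

lemma label_idx_le: "e \<in> TE \<Longrightarrow> i \<in> lab_idx (lab e) \<Longrightarrow> i \<le> n"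
  using adm unfolding admissible_def by (meson atLeastAtMost_iff subsetD)

lemma deg3_labels:
  "w \<in> V \<Longrightarrow> deg3 w \<Longrightarrow> \<exists>j k. j \<noteq> k \<and> lab ` {e \<in> TE. w \<in> e} = {Lab j, Lab k, Dif j k}"
  using adm unfolding admissible_def by blast

lemma Lab_if_no_deg3: "e \<in> TE \<Longrightarrow> (\<forall>x\<in>e. \<not> deg3 x) \<Longrightarrow> \<exists>i. lab e = Lab i"
  using adm unfolding admissible_def by blast

lemma label_idx_disjoint:
  "e \<in> TE \<Longrightarrow> e' \<in> TE \<Longrightarrow> e \<noteq> e' \<Longrightarrow> \<not> (\<exists>x. x \<in> e \<and> x \<in> e' \<and> deg3 x) \<Longrightarrow>
     lab_idx (lab e) \<inter> lab_idx (lab e') = {}"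
  using adm unfolding admissible_def by blast

lemma shared_label_idx_imp_deg3:
  "e \<in> TE \<Longrightarrow> e' \<in> TE \<Longrightarrow> e \<noteq> e' \<Longrightarrow> i \<in> lab_idx (lab e) \<Longrightarrow> i \<in> lab_idx (lab e') \<Longrightarrow>
     \<exists>x. x \<in> e \<and> x \<in> e' \<and> deg3 x"
  using label_idx_disjoint by blast

lemma deg3_label_inj: "w \<in> V \<Longrightarrow> deg3 w \<Longrightarrow> inj_on lab {e \<in> TE. w \<in> e}"
proof -
  assume w: "w \<in> V" "deg3 w"
  then obtain j k where "j \<noteq> k" "lab ` {e \<in> TE. w \<in> e} = {Lab j, Lab k, Dif j k}"
    using deg3_labels by blast
  then have "card (lab ` {e \<in> TE. w \<in> e}) = 3" by simp
  moreover have "{e \<in> TE. w \<in> e} = {e \<in> E. w \<in> e}" using w by (intro tedges_at_nonleaf) simp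
  ultimately show ?thesis
    using w finite_E by (intro eq_card_imp_inj_on) (simp_all add: gdeg_def)
qed

lemma eval_Iv_gens_label_point:
  assumes e: "e \<in> TE" and u: "u \<in> e" "u \<in> V" and g: "g \<in> Iv_gens V E n lab u"
  shows "eval g (label_point (lab e) :: nat \<Rightarrow> 'k::comm_ring_1) = 0"
proof -
  let ?p = "label_point (lab e) :: nat \<Rightarrow> 'k"
  have supp: "?p i = 0" if "i \<notin> lab_idx (lab e)" for i
    using that label_point_nonzero_imp by blast
  show ?thesis
  proof (cases "deg3 u")
    case True
    obtain j k where jk: "j \<noteq> k" "lab ` {e \<in> TE. u \<in> e} = {Lab j, Lab k, Dif j k}"
      using deg3_labels[OF u(2) True] by blast
    then obtain i where "g = Var i" "i \<noteq> j" "i \<noteq> k"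
      using g True unfolding Iv_gens_def by auto
    moreover have "lab e \<in> {Lab j, Lab k, Dif j k}" using jk(2) e u by blast
    ultimately show ?thesis using supp by auto
  next
    case False
    then consider i where "g = Var i" "\<forall>e\<in>TE. u \<in> e \<longrightarrow> i \<notin> lab_idx (lab e)"
      | j k e' where "g = Var j - Var k" "e' \<in> TE" "u \<in> e'" "lab e' = Dif j k"
      using g unfolding Iv_gens_def by auto
    then show ?thesis
    proof cases
      case 1
      then show ?thesis using supp e u by simp
    next
      case 2
      show ?thesis
      proof (cases "e' = e")
        case True
        then show ?thesis using 2 by (simp add: eval_diff)
      next
        case ne: False
        have "\<not> (\<exists>x. x \<in> e' \<and> x \<in> e \<and> deg3 x)"
          using tedges_common_vertex[OF 2(2) e ne 2(3) u(1)] False by blast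
        then have "lab_idx (lab e') \<inter> lab_idx (lab e) = {}"
          using label_idx_disjoint[OF 2(2) e ne] by blast
        then show ?thesis using 2 supp by (auto simp: eval_diff)
      qed
    qed
  qed
qed

lemma label_point_in_Lv_cone:
  assumes "e \<in> TE" "u \<in> e" "u \<in> V"
  shows "(label_point (lab e) :: nat \<Rightarrow> 'k::comm_ring_1) \<in> Lv_cone V E n lab u"
proof -
  have "\<forall>i>n. (label_point (lab e) :: nat \<Rightarrow> 'k) i = 0"
    using label_idx_le[OF assms(1)] label_point_nonzero_imp by force
  then show ?thesis unfolding Lv_cone_def using eval_Iv_gens_label_point[OF assms] by blast
qed

lemma Var_in_Iv_gens_if_absent:
  assumes "i \<le> n" "\<forall>e\<in>TE. u \<in> e \<longrightarrow> i \<notin> lab_idx (lab e)"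
  shows "(Var i :: 'k::comm_ring_1 mpoly) \<in> Iv_gens V E n lab u"
proof (cases "deg3 u")
  case True
  have "i \<noteq> j" if j: "Lab j \<in> lab ` {e \<in> TE. u \<in> e}" for j
  proof -
    obtain e where "e \<in> TE" "u \<in> e" "lab e = Lab j" using j by auto
    then show ?thesis using assms(2) by auto
  qed
  then have "\<forall>j k. lab ` {e \<in> TE. u \<in> e} = {Lab j, Lab k, Dif j k} \<longrightarrow> i \<noteq> j \<and> i \<noteq> k"
    by (metis insertCI)
  then show ?thesis unfolding Iv_gens_def using True assms(1) by auto
next
  case False
  have "(Var i :: 'k mpoly) \<in> {Var i | i. i \<le> n \<and> (\<forall>e\<in>TE. u \<in> e \<longrightarrow> i \<notin> lab_idx (lab e))}"
    using assms by blast
  then show ?thesis unfolding Iv_gens_def using False by simp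
qed

lemma label_idx_near_edge:
  assumes e0: "e0 \<in> TE" "v \<in> e0" "w \<in> e0" "v \<noteq> w" "\<not> deg3 v" "c \<in> lab_idx (lab e0)"
    and e: "e \<in> TE" "u \<in> e" "c \<in> lab_idx (lab e)" "u \<noteq> v"
  shows "u = w \<or> (deg3 w \<and> adj E u w)"
proof (cases "e = e0")
  case True
  then show ?thesis using tedge_doubleton[OF e0(1-4)] e by auto
next
  case False
  then obtain x where x: "x \<in> e" "x \<in> e0" "deg3 x"
    using shared_label_idx_imp_deg3[OF e(1) e0(1) _ e(3) e0(6)] by blast
  then have "x = w" using tedge_doubleton[OF e0(1-4)] e0(5) by auto
  moreover have "u \<noteq> x \<Longrightarrow> adj E u x"
    using tedge_doubleton[OF e(1,2) x(1)] by (auto simp: adj_def)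
  ultimately show ?thesis using x by auto
qed

end

section \<open>A cycle of lines\<close>

locale graph_cycle = labeled_graph V E n lab for V :: "'v set" and E n lab +
  fixes vs :: "'v list" and m :: nat
  assumes m3: "m \<ge> 3" and len: "length vs = m" and dist: "distinct vs" and subV: "set vs \<subseteq> V"
    and adjc: "\<forall>i<m. adj E (vs ! i) (vs ! ((i + 1) mod m))"
begin

definition cv :: "nat \<Rightarrow> 'v" where "cv i = vs ! (i mod m)"
definition ce :: "nat \<Rightarrow> 'v set" where "ce i = {cv i, cv (Suc i)}"

lemma m_pos: "m > 0" using m3 by simp

lemma cv_in_V: "cv i \<in> V"
  using subV len m_pos unfolding cv_def by (metis mod_less_divisor nth_mem subsetD)

lemma cv_eq_iff: "cv i = cv j \<longleftrightarrow> i mod m = j mod m"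
  unfolding cv_def using dist len m_pos by (simp add: nth_eq_iff_index_eq)

lemma cv_periodic: "cv (i + m) = cv i"
  unfolding cv_def by simp

lemma cv_mod: "cv (i mod m + j) = cv (i + j)"
  using cv_eq_iff by (simp add: mod_add_left_eq)

lemma adj_cv: "adj E (cv i) (cv (Suc i))"
proof -
  have "adj E (vs ! (i mod m)) (vs ! ((i mod m + 1) mod m))" using adjc m_pos by simp
  then show ?thesis unfolding cv_def by (simp add: mod_Suc_eq)
qed

lemma adj_cv_prev: "adj E (cv (i + m - 1)) (cv i)"
  using adj_cv[of "i + m - 1"] cv_periodic m_pos by simp

lemma cv_neq: "a < b \<Longrightarrow> b < a + m \<Longrightarrow> cv (c + a) \<noteq> cv (c + b)"
proof
  assume a: "a < b" "b < a + m" "cv (c + a) = cv (c + b)"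
  then have "m dvd (c + b) - (c + a)" using cv_eq_iff mod_eq_dvd_iff_nat[of "c + a" "c + b" m] by simp
  then have "m dvd b - a" by simp
  moreover have "0 < b - a" "b - a < m" using a by auto
  ultimately show False using nat_dvd_not_less by blast
qed

lemma ce_in_E: "ce i \<in> E"
  using adjD[OF adj_cv[of i]] unfolding ce_def by simp

lemma ce_in_TE: "ce i \<in> TE"
  using ce_in_E unfolding tedges_def by simp

lemma ce_periodic: "ce (i + m) = ce i"
  using cv_periodic[of i] cv_periodic[of "Suc i"] unfolding ce_def by simp

lemma ce_mod: "ce (i mod m + j) = ce (i + j)"
  unfolding ce_def using cv_mod[of i j] cv_mod[of i "Suc j"] by simp

lemma ce_mem: "cv i \<in> ce i" "cv (Suc i) \<in> ce i"
  by (auto simp: ce_def)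

lemma ce_prev_eq: "ce (i + m - 1) = {cv (i + m - 1), cv i}"
  using cv_periodic[of i] m_pos unfolding ce_def by (simp add: Suc_diff_Suc)

lemma cv_in_ce_prev: "cv i \<in> ce (i + m - 1)"
  using ce_prev_eq by simp

lemma ce_neq: assumes "a < b" "b < a + m" shows "ce (c + a) \<noteq> ce (c + b)"
proof
  assume "ce (c + a) = ce (c + b)"
  then have x: "cv (c + a) = cv (Suc (c + b)) \<and> cv (Suc (c + a)) = cv (c + b)"
    using cv_neq assms unfolding ce_def by (auto simp: doubleton_eq_iff)
  show False
  proof (cases "b + 1 < a + m")
    case True
    then show False using x cv_neq[of a "b + 1" c] assms by simp
  next
    case False
    then have "b = a + m - 1" using assms by simp
    then have "cv (c + (a + 1)) \<noteq> cv (c + b)" using cv_neq[of "a + 1" b c] assms m3 by simp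
    then show False using x by simp
  qed
qed

lemma ce_prev_ne: "ce (i + m - 1) \<noteq> ce i"
  using ce_neq[of 0 "m - 1" i] m3 by (simp add: add_diff_assoc)

lemma deg3_cv_labels:
  assumes "deg3 (cv i)"
  obtains j k where "j \<noteq> k" "lab (ce (i + m - 1)) \<noteq> lab (ce i)"
    "lab (ce (i + m - 1)) \<in> {Lab j, Lab k, Dif j k}" "lab (ce i) \<in> {Lab j, Lab k, Dif j k}"
proof -
  obtain j k where jk: "j \<noteq> k" "lab ` {e \<in> TE. cv i \<in> e} = {Lab j, Lab k, Dif j k}"
    using deg3_labels[OF cv_in_V assms] by blast
  have mem: "ce (i + m - 1) \<in> {e \<in> TE. cv i \<in> e}" "ce i \<in> {e \<in> TE. cv i \<in> e}"
    using ce_in_TE cv_in_ce_prev ce_mem by auto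
  then have "lab (ce (i + m - 1)) \<noteq> lab (ce i)"
    using deg3_label_inj[OF cv_in_V assms] ce_prev_ne by (meson inj_on_contraD)
  with jk mem that show ?thesis by blast
qed

text \<open>A base vertex: one of degree at most 2 both of whose cycle edges carry single indices.
  If the cycle meets a vertex of degree 3, one of its two cycle edges carries a single index,
  and the far end of that edge is a base vertex because vertices of degree 3 are at distance
  at least 3.\<close>

lemma exists_base_vertex_near_deg3:
  assumes w: "deg3 (cv i)"
  shows "\<exists>\<kappa> a b. \<not> deg3 (cv \<kappa>) \<and> lab (ce (\<kappa> + m - 1)) = Lab a \<and> lab (ce \<kappa>) = Lab b"
proof -
  obtain j k where jk: "j \<noteq> k" "lab (ce (i + m - 1)) \<noteq> lab (ce i)"
    "lab (ce (i + m - 1)) \<in> {Lab j, Lab k, Dif j k}" "lab (ce i) \<in> {Lab j, Lab k, Dif j k}"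
    using deg3_cv_labels[OF w] by blast
  have n1: "\<not> deg3 (cv (Suc i))" using deg3_not_adj adj_cv w by blast
  have n0: "\<not> deg3 (cv (i + m - 1))" using deg3_not_adj adj_cv_prev w by blast
  show ?thesis
  proof (cases "\<exists>a. lab (ce i) = Lab a")
    case True
    then obtain a where a: "lab (ce i) = Lab a" by blast
    have "\<not> deg3 (cv (Suc (Suc i)))"
      using deg3_no_common_nbr[OF adj_cv[of i] adj_cv[of "Suc i"] _ w] cv_neq[of 0 2 i] m3 by auto
    then obtain b where b: "lab (ce (Suc i)) = Lab b"
      using n1 Lab_if_no_deg3 ce_in_TE unfolding ce_def by (metis empty_iff insert_iff)
    have "ce (Suc i + m - 1) = ce i" using ce_periodic[of i] by simp
    then show ?thesis using a b n1 by metis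
  next
    case False
    then obtain b where b: "lab (ce (i + m - 1)) = Lab b" using jk by auto
    let ?p = "i + m - 1"
    have "?p + m - 1 = i + (m - 2) + m" using m3 by simp
    then have "cv (?p + m - 1) = cv (i + (m - 2))" "cv i = cv (i + m)"
      using cv_periodic by simp_all
    then have "cv (?p + m - 1) \<noteq> cv i" using cv_neq[of "m - 2" m i] m3 by simp
    then have "\<not> deg3 (cv (?p + m - 1))"
      using deg3_no_common_nbr[OF adj_cv_prev adj_cv_prev] w by blast
    then obtain a where a: "lab (ce (?p + m - 1)) = Lab a"
      using ce_prev_eq[of ?p] n0 Lab_if_no_deg3 ce_in_TE by (metis empty_iff insert_iff)
    show ?thesis using a b n0 by blast
  qed
qed

lemma exists_base_vertex:
  obtains \<kappa> a b where "\<kappa> < m" "\<not> deg3 (cv \<kappa>)" "lab (ce (\<kappa> + m - 1)) = Lab a" "lab (ce \<kappa>) = Lab b"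
proof -
  obtain \<kappa> a b where k: "\<not> deg3 (cv \<kappa>)" "lab (ce (\<kappa> + m - 1)) = Lab a" "lab (ce \<kappa>) = Lab b"
  proof (cases "\<exists>i. deg3 (cv i)")
    case True
    then show ?thesis using exists_base_vertex_near_deg3 that by blast
  next
    case False
    then show ?thesis using that Lab_if_no_deg3[OF ce_in_TE] unfolding ce_def by (metis empty_iff insert_iff)
  qed
  have "\<kappa> mod m + m - 1 = \<kappa> mod m + (m - 1)" "\<kappa> + m - 1 = \<kappa> + (m - 1)" using m_pos by auto
  then have "cv (\<kappa> mod m) = cv \<kappa>" "ce (\<kappa> mod m) = ce \<kappa>" "ce (\<kappa> mod m + m - 1) = ce (\<kappa> + m - 1)"
    using cv_mod[of \<kappa> 0] ce_mod[of \<kappa> 0] ce_mod[of \<kappa> "m - 1"] by simp_all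
  moreover have "\<kappa> mod m < m" using m_pos by simp
  ultimately show ?thesis using k that by metis
qed

end

locale base_vertex = graph_cycle V E n lab vs m for V :: "'v set" and E n lab vs m +
  fixes \<kappa> a b :: nat
  assumes not_deg3: "\<not> deg3 (cv \<kappa>)"
    and lab_prev: "lab (ce (\<kappa> + m - 1)) = Lab a" and lab_next: "lab (ce \<kappa>) = Lab b"
begin

abbreviation "v0 \<equiv> cv \<kappa>"
abbreviation "v_prev \<equiv> cv (\<kappa> + m - 1)"
abbreviation "v_next \<equiv> cv (Suc \<kappa>)"

lemma v_prev_ne_v_next: "v_prev \<noteq> v_next"
proof -
  have "cv (\<kappa> + 1) \<noteq> cv (\<kappa> + (m - 1))" using cv_neq[of 1 "m - 1" \<kappa>] m3 by simp
  moreover have "\<kappa> + (m - 1) = \<kappa> + m - 1" using m3 by simp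
  ultimately show ?thesis by simp
qed

lemma a_ne_b: "a \<noteq> b"
proof -
  have "\<not> (\<exists>x. x \<in> ce (\<kappa> + m - 1) \<and> x \<in> ce \<kappa> \<and> deg3 x)"
    using tedges_common_vertex[OF ce_in_TE ce_in_TE ce_prev_ne, of v0] cv_in_ce_prev ce_mem not_deg3
    by blast
  then have "lab_idx (lab (ce (\<kappa> + m - 1))) \<inter> lab_idx (lab (ce \<kappa>)) = {}"
    using label_idx_disjoint[OF ce_in_TE ce_in_TE ce_prev_ne] by blast
  then show ?thesis using lab_prev lab_next by simp
qed

lemma a_le_n: "a \<le> n"
  using label_idx_le[OF ce_in_TE, of a "\<kappa> + m - 1"] lab_prev by simp

lemma b_le_n: "b \<le> n"
  using label_idx_le[OF ce_in_TE, of b \<kappa>] lab_next by simp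

text \<open>No vertex other than \<open>v0\<close> meets both indices \<open>a\<close> and \<open>b\<close>: otherwise it would close a
  triangle with \<open>v0\<close> or be a common neighbour of two vertices of degree 3.\<close>

lemma not_both_indices_at:
  assumes "u \<noteq> v0"
    and "e \<in> TE" "u \<in> e" "a \<in> lab_idx (lab e)" "e' \<in> TE" "u \<in> e'" "b \<in> lab_idx (lab e')"
  shows False
proof -
  have ne: "v0 \<noteq> v_prev" "v0 \<noteq> v_next"
    using adjD[OF adj_cv_prev[of \<kappa>]] adjD[OF adj_cv[of \<kappa>]] by auto
  have mem: "v_prev \<in> ce (\<kappa> + m - 1)" "a \<in> lab_idx (lab (ce (\<kappa> + m - 1)))"
    "b \<in> lab_idx (lab (ce \<kappa>))"
    using ce_prev_eq[of \<kappa>] lab_prev lab_next by auto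
  have A: "u = v_prev \<or> (deg3 v_prev \<and> adj E u v_prev)"
    by (rule label_idx_near_edge[OF ce_in_TE cv_in_ce_prev mem(1) ne(1) not_deg3 mem(2) assms(2-4,1)])
  have B: "u = v_next \<or> (deg3 v_next \<and> adj E u v_next)"
    by (rule label_idx_near_edge[OF ce_in_TE ce_mem ne(2) not_deg3 mem(3) assms(5-7,1)])
  have adj_prev: "adj E v0 v_prev" using adj_cv_prev adj_sym by blast
  have adj_next: "adj E v0 v_next" using adj_cv by blast
  consider "u = v_prev" "u = v_next" | "u = v_prev" "adj E u v_next" | "adj E u v_prev" "u = v_next"
    | "deg3 v_prev" "deg3 v_next" "adj E u v_prev" "adj E u v_next"
    using A B by blast
  then show False
  proof cases
    case 1
    then show False using v_prev_ne_v_next by simp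
  next
    case 2
    then show False using no_triangle[OF adj_prev _ adj_next] by simp
  next
    case 3
    then have "adj E v_prev v_next" using adj_sym by simp
    then show False using no_triangle[OF adj_prev _ adj_next] by simp
  next
    case 4
    then show False using deg3_no_common_nbr[OF adj_sym[of u v_prev] _ v_prev_ne_v_next] by simp
  qed
qed

lemma Var_a_or_b_in_Iv_gens:
  assumes "u \<noteq> v0"
  shows "(Var a :: 'k::comm_ring_1 mpoly) \<in> Iv_gens V E n lab u \<or> (Var b :: 'k mpoly) \<in> Iv_gens V E n lab u"
proof (rule ccontr)
  assume "\<not> ?thesis"
  then obtain e e' where "e \<in> TE" "u \<in> e" "a \<in> lab_idx (lab e)" "e' \<in> TE" "u \<in> e'" "b \<in> lab_idx (lab e')"
    using Var_in_Iv_gens_if_absent[of a u] Var_in_Iv_gens_if_absent[of b u] a_le_n b_le_n by blast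
  then show False using not_both_indices_at[OF assms] by blast
qed

lemma tedges_at_v0: "{e \<in> TE. v0 \<in> e} = {ce (\<kappa> + m - 1), ce \<kappa>}"
proof -
  have sub: "{ce (\<kappa> + m - 1), ce \<kappa>} \<subseteq> {e \<in> E. v0 \<in> e}"
    using ce_in_E cv_in_ce_prev ce_mem by auto
  have fin: "finite {e \<in> E. v0 \<in> e}" using finite_E by simp
  have c2: "card {ce (\<kappa> + m - 1), ce \<kappa>} = 2" using ce_prev_ne by simp
  have "gdeg E v0 \<ge> 2" unfolding gdeg_def using card_mono[OF fin sub] c2 by simp
  then have g2: "gdeg E v0 = 2" using deg_le_3[OF cv_in_V[of \<kappa>]] not_deg3 by simp
  have "{ce (\<kappa> + m - 1), ce \<kappa>} = {e \<in> E. v0 \<in> e}"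
    using card_seteq[OF fin sub] c2 g2 unfolding gdeg_def by simp
  moreover have "{e \<in> TE. v0 \<in> e} = {e \<in> E. v0 \<in> e}"
    using g2 by (intro tedges_at_nonleaf) simp
  ultimately show ?thesis by simp
qed

lemma Var_in_Iv_gens_v0:
  assumes "t \<le> n" "t \<noteq> a" "t \<noteq> b"
  shows "(Var t :: 'k::comm_ring_1 mpoly) \<in> Iv_gens V E n lab v0"
proof (rule Var_in_Iv_gens_if_absent[OF assms(1)], intro ballI impI)
  fix e assume "e \<in> TE" "v0 \<in> e"
  then have "e = ce (\<kappa> + m - 1) \<or> e = ce \<kappa>" using tedges_at_v0 by blast
  then show "t \<notin> lab_idx (lab e)" using lab_prev lab_next assms(2,3) by auto
qed

end

context graph_cycle
begin

definition edge_point :: "nat \<Rightarrow> nat \<Rightarrow> 'k::comm_ring_1" where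
  "edge_point i = label_point (lab (ce i))"

lemma edge_point_periodic: "edge_point (i + m) = edge_point i"
  by (simp add: edge_point_def ce_periodic)

lemma edge_point_nonzero_imp: "edge_point i j \<noteq> 0 \<Longrightarrow> j \<in> lab_idx (lab (ce i))"
  unfolding edge_point_def by (rule label_point_nonzero_imp)

lemma edge_points_in_Lv_cone:
  "(edge_point (k + m - 1) :: nat \<Rightarrow> 'k::comm_ring_1) \<in> Lv_cone V E n lab (cv k)"
  "(edge_point k :: nat \<Rightarrow> 'k) \<in> Lv_cone V E n lab (cv k)"
  unfolding edge_point_def
  using label_point_in_Lv_cone[OF ce_in_TE cv_in_ce_prev cv_in_V]
    label_point_in_Lv_cone[OF ce_in_TE ce_mem(1) cv_in_V] by auto

lemma cycle_label_idx_disjoint: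
  assumes "t < i" "i < m" "\<forall>x\<in>ce (c + t) \<inter> ce (c + i). \<not> deg3 x"
  shows "lab_idx (lab (ce (c + t))) \<inter> lab_idx (lab (ce (c + i))) = {}"
  using label_idx_disjoint[OF ce_in_TE ce_in_TE ce_neq[of t i c]] assms by auto

end

context base_vertex
begin

definition later_idx :: "nat \<Rightarrow> nat set" where
  "later_idx s = (\<Union>i\<in>{s..<m}. lab_idx (lab (ce (\<kappa> + i))))"

abbreviation points_from :: "nat \<Rightarrow> (nat \<Rightarrow> 'k::comm_ring_1) list" where
  "points_from s \<equiv> map (\<lambda>i. edge_point (\<kappa> + i)) [s..<m]"

lemma later_idx_Cons: "s < m \<Longrightarrow> later_idx s = lab_idx (lab (ce (\<kappa> + s))) \<union> later_idx (Suc s)"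
proof -
  assume "s < m"
  then have "{s..<m} = insert s {Suc s..<m}" by auto
  then show ?thesis unfolding later_idx_def by simp
qed

lemma block_independent_extend_single:
  assumes "Suc s \<le> m" "\<not> deg3 (cv (\<kappa> + s))" "\<not> deg3 (cv (\<kappa> + Suc s))"
    and C: "block_independent (points_from (Suc s) :: (nat \<Rightarrow> 'k::{comm_ring_1, ring_char_0}) list) C"
      "C \<subseteq> later_idx (Suc s)"
  shows "\<exists>C'. block_independent (points_from s :: (nat \<Rightarrow> 'k) list) C' \<and> C' \<subseteq> later_idx s"
proof -
  have "\<forall>x\<in>ce (\<kappa> + s). \<not> deg3 x" using assms(2,3) by (simp add: ce_def)
  then obtain c where c: "lab (ce (\<kappa> + s)) = Lab c"
    using Lab_if_no_deg3[OF ce_in_TE] by blast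
  have "lab_idx (lab (ce (\<kappa> + s))) \<inter> lab_idx (lab (ce (\<kappa> + i))) = {}" if "Suc s \<le> i" "i < m" for i
    by (rule cycle_label_idx_disjoint) (use that assms(2,3) in \<open>auto simp: ce_def\<close>)
  then have "c \<notin> later_idx (Suc s)"
    using c unfolding later_idx_def by fastforce
  with C have "block_independent ((edge_point (\<kappa> + s) :: nat \<Rightarrow> 'k) # points_from (Suc s)) (insert c C)"
    by (intro block_independent.single) (auto simp: edge_point_def unit_vec_def c)
  moreover have "insert c C \<subseteq> later_idx s"
    using C(2) c later_idx_Cons assms(1) by auto
  moreover have "points_from s = edge_point (\<kappa> + s) # points_from (Suc s)"
    using assms(1) by (simp add: upt_conv_Cons)
  ultimately show ?thesis by metis
qed

lemma block_independent_extend_pair: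
  assumes "Suc (Suc s) \<le> m" "\<not> deg3 (cv (\<kappa> + s))" "deg3 (cv (\<kappa> + Suc s))"
    and C: "block_independent (points_from (Suc (Suc s)) :: (nat \<Rightarrow> 'k::{comm_ring_1, ring_char_0}) list) C"
      "C \<subseteq> later_idx (Suc (Suc s))"
  shows "\<exists>C'. block_independent (points_from s :: (nat \<Rightarrow> 'k) list) C' \<and> C' \<subseteq> later_idx s"
proof -
  have n2: "\<not> deg3 (cv (\<kappa> + Suc (Suc s)))"
    using deg3_not_adj[OF adj_cv[of "\<kappa> + Suc s"] assms(3)] by auto
  have "ce (\<kappa> + Suc s + m - 1) = ce (\<kappa> + s)" using ce_periodic[of "\<kappa> + s"] by simp
  then obtain j k where jk: "j \<noteq> k" "lab (ce (\<kappa> + s)) \<noteq> lab (ce (\<kappa> + Suc s))"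
    "lab (ce (\<kappa> + s)) \<in> {Lab j, Lab k, Dif j k}" "lab (ce (\<kappa> + Suc s)) \<in> {Lab j, Lab k, Dif j k}"
    using deg3_cv_labels[OF assms(3)] by metis
  have jk_idx: "j \<in> lab_idx (lab (ce (\<kappa> + s))) \<union> lab_idx (lab (ce (\<kappa> + Suc s)))"
    "k \<in> lab_idx (lab (ce (\<kappa> + s))) \<union> lab_idx (lab (ce (\<kappa> + Suc s)))"
    using jk by auto
  have "lab_idx (lab (ce (\<kappa> + t))) \<inter> lab_idx (lab (ce (\<kappa> + i))) = {}"
    if t: "t = s \<or> t = Suc s" and i: "Suc (Suc s) \<le> i" "i < m" for t i
  proof (rule cycle_label_idx_disjoint)
    have "cv (\<kappa> + Suc s) \<noteq> cv (\<kappa> + i)" "cv (\<kappa> + Suc s) \<noteq> cv (\<kappa> + Suc i)"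
      using cv_neq[of "Suc s" i \<kappa>] cv_neq[of "Suc s" "Suc i" \<kappa>] i by auto
    then show "\<forall>x\<in>ce (\<kappa> + t) \<inter> ce (\<kappa> + i). \<not> deg3 x"
      using t assms(2) n2 by (auto simp: ce_def)
  qed (use t i in auto)
  then have "x \<notin> later_idx (Suc (Suc s))"
    if "x \<in> lab_idx (lab (ce (\<kappa> + s))) \<union> lab_idx (lab (ce (\<kappa> + Suc s)))" for x
    using that unfolding later_idx_def by fastforce
  then have "j \<notin> C" "k \<notin> C" using jk_idx C(2) by blast+
  then have "block_independent ((edge_point (\<kappa> + s) :: nat \<Rightarrow> 'k) # edge_point (\<kappa> + Suc s)
      # points_from (Suc (Suc s))) (insert j (insert k C))"
    using C(1) label_point_outside[OF jk(3)] label_point_outside[OF jk(4)]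
      label_point_pair_minor[OF jk(1) jk(3) jk(4) jk(2)]
    by (intro block_independent.pair jk(1)) (auto simp: edge_point_def)
  moreover have "insert j (insert k C) \<subseteq> later_idx s"
    using C(2) jk_idx later_idx_Cons assms(1) by auto
  moreover have "points_from s = edge_point (\<kappa> + s) # edge_point (\<kappa> + Suc s) # points_from (Suc (Suc s))"
    using assms(1) by (simp add: upt_conv_Cons)
  ultimately show ?thesis by metis
qed

text \<open>Walking around the cycle from \<open>v0\<close>, consecutive edges whose common vertex has degree 3
  form a pair block; all other edges carry a single index.  Since vertices of degree 3 are
  far apart, different blocks involve disjoint indices.\<close>

lemma block_independent_points_from:
  assumes "s \<le> m" "\<not> deg3 (cv (\<kappa> + s))"
  shows "\<exists>C. block_independent (points_from s :: (nat \<Rightarrow> 'k::{comm_ring_1, ring_char_0}) list) C"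
proof -
  have "\<exists>C. block_independent (points_from s :: (nat \<Rightarrow> 'k) list) C \<and> C \<subseteq> later_idx s"
    using assms
  proof (induction "m - s" arbitrary: s rule: less_induct)
    case less
    show ?case
    proof (cases "s = m")
      case True
      then show ?thesis by (auto intro: block_independent.nil)
    next
      case False
      then have sm: "Suc s \<le> m" using less.prems(1) by simp
      show ?thesis
      proof (cases "deg3 (cv (\<kappa> + Suc s))")
        case True
        have "Suc s \<noteq> m" using True not_deg3 cv_periodic[of \<kappa>] by (auto simp: add.commute)
        then have ssm: "Suc (Suc s) \<le> m" using sm by simp
        have "\<not> deg3 (cv (\<kappa> + Suc (Suc s)))"
          using deg3_not_adj[OF adj_cv[of "\<kappa> + Suc s"] True] by auto
        moreover have "m - Suc (Suc s) < m - s" using ssm by simp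
        ultimately obtain C where "block_independent (points_from (Suc (Suc s)) :: (nat \<Rightarrow> 'k) list) C"
          "C \<subseteq> later_idx (Suc (Suc s))"
          using less.hyps[of "Suc (Suc s)"] ssm by blast
        then show ?thesis
          using block_independent_extend_pair[OF ssm less.prems(2) True] by blast
      next
        case nd: False
        have "m - Suc s < m - s" using sm by simp
        then obtain C where "block_independent (points_from (Suc s) :: (nat \<Rightarrow> 'k) list) C"
          "C \<subseteq> later_idx (Suc s)"
          using less.hyps[of "Suc s"] sm nd by blast
        then show ?thesis
          using block_independent_extend_single[OF sm less.prems(2) nd] by blast
      qed
    qed
  qed
  then show ?thesis by blast
qed

end

lemma map_upt_first_last:
  assumes "m \<ge> 2"
  shows "map (\<lambda>i. F (c + i)) [0..<m] = F c # map (\<lambda>i. F (c + 1 + i)) [0..<m - 2] @ [F (c + m - 1)]"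
proof (rule nth_equalityI)
  fix i assume "i < length (map (\<lambda>i. F (c + i)) [0..<m])"
  then have i: "i < m" by simp
  show "map (\<lambda>i. F (c + i)) [0..<m] ! i = (F c # map (\<lambda>i. F (c + 1 + i)) [0..<m - 2] @ [F (c + m - 1)]) ! i"
  proof (cases i)
    case (Suc i')
    have last: "Suc (c + (m - 2)) = c + m - 1" using assms by simp
    consider "i' < m - 2" | "i' = m - 2" using Suc i by linarith
    then show ?thesis
      by cases (use Suc i last in \<open>simp_all add: nth_append\<close>)
  qed (use i in simp)
qed (use assms in simp)

context base_vertex
begin

text \<open>The wedge of all \<open>m\<close> edge points is nonzero at some index set \<open>C\<close>; the points on
  the two edges at \<open>v0\<close> are \<open>e_b\<close> and \<open>e_a\<close>, so deleting \<open>a\<close> and \<open>b\<close> from \<open>C\<close> leaves a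
  nonzero coefficient of the wedge of the remaining \<open>m - 2\<close> points.\<close>

lemma exists_support:
  obtains T0 where "T0 \<subseteq> {0..n}" "card T0 = m - 2" "a \<notin> T0" "b \<notin> T0"
    "cycle_weight m (edge_point :: nat \<Rightarrow> nat \<Rightarrow> 'k::{idom, ring_char_0}) \<kappa> T0 \<noteq> 0"
proof -
  let ?N = "edge_point :: nat \<Rightarrow> nat \<Rightarrow> 'k"
  let ?L = "map (\<lambda>i. ?N (\<kappa> + 1 + i)) [0..<m - 2]"
  obtain C where "block_independent (map (\<lambda>i. ?N (\<kappa> + i)) [0..<m]) C"
    using block_independent_points_from[of 0] not_deg3 by auto
  then have "wedge_list (map (\<lambda>i. ?N (\<kappa> + i)) [0..<m]) C \<noteq> 0"
    using block_independent_wedge_list_nonzero by blast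
  moreover have "?N \<kappa> = unit_vec b" "?N (\<kappa> + m - 1) = unit_vec a"
    using lab_prev lab_next by (simp_all add: edge_point_def)
  ultimately have "wedge (unit_vec b) (wedge_list (?L @ [unit_vec a])) C \<noteq> 0"
    using map_upt_first_last[of m ?N \<kappa>] m3 by simp
  then have "wedge_list (?L @ [unit_vec a]) (C - {b}) \<noteq> 0"
    using wedge_unit_vec_nonzero_imp by blast
  then have "wedge (unit_vec a) (wedge_list ?L) (C - {b}) \<noteq> 0"
    using wedge_list_rotate[of "unit_vec a" ?L "C - {b}"] by simp
  then have "a \<in> C - {b}" and nz: "wedge_list ?L (C - {b} - {a}) \<noteq> 0"
    using wedge_unit_vec_nonzero_imp by blast+
  have "C - {b} - {a} \<subseteq> {0..n}"
  proof
    fix i assume "i \<in> C - {b} - {a}"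
    then obtain j where "?N j i \<noteq> 0" using wedge_list_nonzero_imp[OF nz] by auto
    then have "i \<in> lab_idx (lab (ce j))" by (rule edge_point_nonzero_imp)
    then show "i \<in> {0..n}" using label_idx_le[OF ce_in_TE] by simp
  qed
  moreover have "card (C - {b} - {a}) = m - 2"
    using wedge_list_nonzero_imp[OF nz] by simp
  moreover have "cycle_weight m ?N \<kappa> (C - {b} - {a}) \<noteq> 0"
    unfolding cycle_weight_def using nz by simp
  ultimately show ?thesis using that by blast
qed

lemma polar2_edge_points_Var_a_Var_b:
  assumes "k < m" "\<kappa> < m"
  shows "polar2 (edge_point (k + m - 1) :: nat \<Rightarrow> 'k::{comm_ring_1, ring_char_0}) (edge_point k) (Var a * Var b)
       = (if k = \<kappa> then 1 else 0)"
proof (cases "k = \<kappa>")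
  case True
  then show ?thesis
    using lab_prev lab_next a_ne_b by (simp add: polar2_Var_Var edge_point_def unit_vec_def)
next
  case False
  then have "cv k \<noteq> v0" using cv_eq_iff assms by simp
  then have "(Var a :: 'k mpoly) \<in> Iv_gens V E n lab (cv k) \<or> (Var b :: 'k mpoly) \<in> Iv_gens V E n lab (cv k)"
    by (rule Var_a_or_b_in_Iv_gens)
  then have "(edge_point (k + m - 1) a = (0::'k) \<and> edge_point k a = (0::'k))
           \<or> (edge_point (k + m - 1) b = (0::'k) \<and> edge_point k b = (0::'k))"
    using Lv_cone_Var[OF edge_points_in_Lv_cone(1)] Lv_cone_Var[OF edge_points_in_Lv_cone(2)] by blast
  then show ?thesis using False by (auto simp: polar2_Var_Var)
qed

text \<open>The line \<open>L_(cv k)\<close> lies on \<open>C_G\<close> and contains both edge points at \<open>cv k\<close>.\<close>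

lemma polar2_edge_points_vanishing_ideal:
  fixes f :: "'k::field_char_0 mpoly"
  assumes "f \<in> vanishing_ideal n (CG_cone V E n lab)"
  shows "polar2 (edge_point (k + m - 1)) (edge_point k) f = 0"
proof (rule polar2_vanishing_ideal[OF assms])
  let ?P = "edge_point (k + m - 1) :: nat \<Rightarrow> 'k" and ?Q = "edge_point k :: nat \<Rightarrow> 'k"
  have P: "?P \<in> Lv_cone V E n lab (cv k)" and Q: "?Q \<in> Lv_cone V E n lab (cv k)"
    by (rule edge_points_in_Lv_cone)+
  show "(\<lambda>i. x * ?P i) \<in> CG_cone V E n lab" "(\<lambda>i. x * ?Q i) \<in> CG_cone V E n lab"
    "(\<lambda>i. x * (?P i + ?Q i)) \<in> CG_cone V E n lab" for x
    unfolding CG_cone_def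
    by (rule UN_I[OF cv_in_V[of k]], intro Lv_cone_scale Lv_cone_add P Q)+
qed

lemma cubic_in_vanishing_ideal:
  assumes "t \<le> n" "t \<noteq> a" "t \<noteq> b"
  shows "(Var t * (Var a * Var b) :: 'k::comm_ring_1 mpoly) \<in> vanishing_ideal n (CG_cone V E n lab)"
proof -
  let ?M = "var_mon t + (var_mon a + var_mon b)"
  have eq: "(Var t * (Var a * Var b) :: 'k mpoly) = Poly_Mapping.single ?M 1"
    by (simp add: Var_def mult_single)
  have "Poly_Mapping.keys ?M \<subseteq> {t, a, b}"
    using keys_add[of "var_mon t" "var_mon a + var_mon b"] keys_add[of "var_mon a" "var_mon b"] by auto
  then have "Poly_Mapping.keys ?M \<subseteq> {0..n}"
    using assms(1) a_le_n b_le_n by auto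
  moreover have "mon_eval ?M p = 0" if p: "p \<in> CG_cone V E n lab" for p :: "nat \<Rightarrow> 'k"
  proof -
    obtain u where u: "u \<in> V" "p \<in> Lv_cone V E n lab u"
      using p unfolding CG_cone_def by blast
    have "p t = 0" if "u = v0"
      using Lv_cone_Var[OF u(2)] Var_in_Iv_gens_v0[OF assms] that by blast
    moreover have "p a = 0 \<or> p b = 0" if "u \<noteq> v0"
      using Lv_cone_Var[OF u(2)] Var_a_or_b_in_Iv_gens[OF that] by blast
    ultimately show ?thesis by (cases "u = v0") (auto simp: mon_eval_add)
  qed
  ultimately show ?thesis
    unfolding eq by (intro monomial_in_vanishing_ideal) auto
qed

end

lemma Var_mult_Var_eq: "(Var i * Var j :: 'k::comm_ring_1 mpoly) = Poly_Mapping.single (var_mon i + var_mon j) 1"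
  by (simp add: Var_def mult_single)

lemma Var_mult_Var_polyS: "i \<le> n \<Longrightarrow> j \<le> n \<Longrightarrow> (Var i * Var j :: 'k::comm_ring_1 mpoly) \<in> polyS n"
  unfolding Var_mult_Var_eq polyS_def using keys_add[of "var_mon i" "var_mon j"] by auto

lemma homog_Var_mult_Var: "homog 2 (Var i * Var j :: 'k::comm_ring_1 mpoly)"
  unfolding Var_mult_Var_eq homog_def by (simp add: mdeg_add)

lemma kchain_single:
  assumes "T0 \<subseteq> {0..n}" "card T0 = i" "f \<in> polyS n"
  shows "kchain n i (\<lambda>T. if T = T0 then f else 0)"
  using assms by (simp add: kchain_def polyS_def)

lemma kdiff_single_in_vanishing_ideal:
  assumes "\<And>t. t \<in> T0 \<Longrightarrow> Var t * f \<in> vanishing_ideal n X"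
  shows "kdiff n (\<lambda>T. if T = T0 then f else 0) U \<in> vanishing_ideal n X"
  unfolding kdiff_def
  using assms by (auto intro!: vanishing_ideal_sum vanishing_ideal_neg_one_power
      simp: mult.assoc vanishing_ideal_zero)

context base_vertex
begin

text \<open>The chain \<open>x_a x_b e_T0\<close> is a Koszul cycle modulo \<open>I_C\<close> of internal degree \<open>m\<close>
  in homological degree \<open>m - 2\<close>, detected by the cycle functional.\<close>

lemma betti_nonzero_at_cycle:
  assumes "\<kappa> < m"
  shows "betti_nonzero n (vanishing_ideal n (CG_cone V E n lab :: (nat \<Rightarrow> 'k::field_char_0) set)) (m - 2) m"
proof -
  let ?I = "vanishing_ideal n (CG_cone V E n lab :: (nat \<Rightarrow> 'k) set)"
  let ?N = "edge_point :: nat \<Rightarrow> nat \<Rightarrow> 'k"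
  obtain T0 where T0: "T0 \<subseteq> {0..n}" "card T0 = m - 2" "a \<notin> T0" "b \<notin> T0"
    "cycle_weight m ?N \<kappa> T0 \<noteq> 0"
    using exists_support by blast
  define c where "c = (\<lambda>T. if T = T0 then (Var a * Var b :: 'k mpoly) else 0)"
  have chain: "kchain n (m - 2) c"
    unfolding c_def using T0(1,2) a_le_n b_le_n by (intro kchain_single Var_mult_Var_polyS)
  have "m - (m - 2) = 2" using m3 by simp
  then have hom: "\<forall>T. homog (m - (m - 2)) (c T)"
    using homog_Var_mult_Var by (simp add: c_def homog_def)
  have cycle: "\<forall>U. kdiff n c U \<in> ?I"
  proof
    fix U
    have "Var t * (Var a * Var b) \<in> ?I" if "t \<in> T0" for t
      using that T0(1,3,4) by (intro cubic_in_vanishing_ideal) auto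
    then show "kdiff n c U \<in> ?I"
      unfolding c_def by (rule kdiff_single_in_vanishing_ideal)
  qed
  have "cycle_functional n m ?N c = cycle_weight m ?N \<kappa> T0"
    unfolding c_def using T0(1) assms polar2_edge_points_Var_a_Var_b by (intro cycle_functional_single)
  then have not_boundary: "\<not> (\<exists>b a. (\<forall>T. a T \<in> ?I) \<and> (\<forall>T. c T = kdiff n b T + a T))"
  proof (intro cycle_functional_nonzero_imp_not_boundary[of m ?N])
    show "polar2 (?N (k + m - 1)) (?N k) f = 0" if "f \<in> ?I" for k f
      using that by (rule polar2_edge_points_vanishing_ideal)
  qed (use m3 edge_point_periodic T0(5) in auto)
  show ?thesis
    unfolding betti_nonzero_def
  proof (intro exI[of _ c] conjI)
    show "m - 2 \<le> m" by simp
    show "\<not> (\<exists>b a. kchain n (m - 2 + 1) b \<and> kchain n (m - 2) a \<and> (\<forall>T. a T \<in> ?I) \<and>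
                   (\<forall>T. c T = kdiff n b T + a T))"
      using not_boundary by blast
  qed (fact chain hom cycle)+
qed

end

theorem corollary3p3:
  fixes V :: "'v set" and E :: "'v set set" and m :: nat
    and lab :: "'v set \<Rightarrow> label"
  assumes G: "graph_conditions V E"
    and n_def: "n = card V - (card E - card V + 1)"
    and adm: "admissible V E n lab"
    and cyc: "has_cycle V E m"
  shows "\<not> satisfies_N n
           (vanishing_ideal n (CG_cone V E n lab :: (nat \<Rightarrow> 'k::{alg_closed_field, field_char_0}) set))
           2 (m - 2)"
proof -
  \<comment> \<open>The value of \<open>n\<close> plays no role: only admissibility of the labelling is used.\<close>
  obtain vs where "m \<ge> 3" "length vs = m" "distinct vs" "set vs \<subseteq> V"
    "\<forall>i<m. adj E (vs ! i) (vs ! ((i + 1) mod m))"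
    using cyc unfolding has_cycle_def by blast
  then interpret graph_cycle V E n lab vs m
    using G adm by unfold_locales
  obtain \<kappa> a b where "\<kappa> < m" "\<not> deg3 (cv \<kappa>)" "lab (ce (\<kappa> + m - 1)) = Lab a" "lab (ce \<kappa>) = Lab b"
    by (rule exists_base_vertex)
  then interpret base_vertex V E n lab vs m \<kappa> a b
    by unfold_locales
  have "betti_nonzero n (vanishing_ideal n (CG_cone V E n lab :: (nat \<Rightarrow> 'k) set)) (m - 2) m"
    by (rule betti_nonzero_at_cycle) fact
  moreover have "1 \<le> m - 2" "m \<noteq> m - 2 + 2 - 1" using m3 by auto
  ultimately show ?thesis unfolding satisfies_N_def by blast
qed

end
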